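(* Consider a finite-horizon RMAB as in the context. (1) When a policy $\pi\in\Pi_{\delta_N}(\mathbf{y}^* )$ is applied to the $N$-system, its state trajectory $(\mathbf{X}^\pi_h)_{1\le h\le H}$ satisfies \[ \mathbb{P}\big(\|\mathbf{X}^\pi_h-\mathbf{x}^*_h\|_\infty\le z_h\delta_N\ \ \forall h\big)=1-\mathcal{O}(N^{-\log N}). \] (2) When a policy $\tilde\pi\in\Pi_{\delta_N}(\mathbf{y}^* )$ is applied to the Gaussian stochastic system, with trajectory $\tilde{\mathbf{X}}^{\tilde\pi}_h$ and actions $\mathbf{Y}_h=\tilde\pi(\tilde{\mathbf{X}}^{\tilde\pi}_h,h)$, then for $1\le h\le H-1$, \[ \mathbb{P}\Big(\tilde{\mathbf{X}}^{\tilde\pi}_{h+1}=\phi_h(\mathbf{Y}_h)+\tfrac{\mathbf{Z}_h}{\sqrt N}\ \Big|\ \|\tilde{\mathbf{X}}^{\tilde\pi}_h-\mathbf{x}^*_h\|_\infty\le z_h\delta_N\Big) =\mathbb{P}\Big(\phi_h(\mathbf{Y}_h)+\tfrac{\mathbf{Z}_h}{\sqrt N}\ge\mathbf{0}\ \Big|\ \|\tilde{\mathbf{X}}^{\tilde\pi}_h-\mathbf{x}^*_h\|_\infty\le z_h\delta_N\Big)=1-\mathcal{O}(N^{-\log N}), \] and \[ \mathbb{P}\big(\|\tilde{\mathbf{X}}^{\tilde\pi}_h-\mathbf{x}^*_h\|_\infty\le z_h\delta_N\ \ \forall h\big)=1-\mathcal{O}(N^{-\log N})\ge1-\frac{\tilde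 C}{N^{\log N}}, \] where $\tilde C>0$ is a constant independent of $N$.
   Context: RMAB ($N$-system): states $\mathcal{S}=\{1,\dots,S\}$, actions $\{0,1\}$, horizon $H$; kernels $\mathbf{P}_h(\cdot\mid s,a)$, rewards $r_h(s,a)\ge0$, $r_{\max}=\max r_h(s,a)$, $\mathbf{r}_h\in\mathbb{R}^{2S}$; budget $\alpha\in(0,1)$, $\alpha N\in\mathbb{N}$; initial state $\mathbf{x}_{\mathrm{ini}}\in\Delta^S_N=\{\mathbf{x}\in\Delta^S:N\mathbf{x}\in\mathbb{N}^S\}$. State = fractions of arms per state; action $\mathbf{y}\in\Delta^{2S}$ = fractions per state-action, feasible for $\mathbf{x}$ iff $\mathbf{y}(\cdot,0)+\mathbf{y}(\cdot,1)=\mathbf{x}$ and $\sum_sy(s,1)=\alpha$. In the $N$-system, given action $\mathbf{y}_h$, $\mathbf{X}_{h+1}=\frac1N\sum_{s,a}\mathbf{U}^{(s,a)}_h$ with independent $\mathbf{U}^{(s,a)}_h\sim\mathrm{Multinomial}(Ny_h(s,a),\mathbf{P}_h(\cdot\mid s,a))$. Fluid LP: maximize $\sum_h\mathbf{r}_h\mathbf{y}_h^\top$ s.t. $\sum_sy_h(s,1)=\alpha$, $\mathbf{y}_h(\cdot,0)+\mathbf{y}_h(\cdot,1)=\mathbf{x}_h$, $\mathbf{y}_h\ge0$, $\mathbf{x}_1=\mathbf{x}_{\mathrm{ini}}$, $\mathbf{x}_{h+1}=\phi_h(\mathbf{y}_h)$, $\phi_h(\mathbf{y})(s')=\sum_{s,a}y(s,a)\mathbf{P}_h(s'\mid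 s,a)$; $(\mathbf{x}^*,\mathbf{y}^* )$ an optimal solution; $\sigma:=\inf_{\mathbf{y}\in\mathcal{U},\mathbf{y}\ne\mathbf{y}^*}\mathbf{r}(\mathbf{y}^*-\mathbf{y})^\top/\|\mathbf{y}^*-\mathbf{y}\|_\infty$ ($\mathcal{U}$ the LP feasible set, $\mathbf{r}=(\mathbf{r}_1,\dots,\mathbf{r}_H)$). Constants: $\delta_N=2\log N/\sqrt N$, $L_h$ the $\|\cdot\|_\infty$-Lipschitz constant of $\phi_h$, $\kappa=\max\{2+6S,3+2r_{\max}HS/\sigma\}$, $z_1=1$, $z_{h+1}=\sqrt S(\kappa L_hz_h+1)$. $\Pi_{\delta_N}(\mathbf{y}^* )$: policies with $\|\pi(\mathbf{x},h)-\mathbf{y}^*_h\|_\infty\le\kappa z_h\delta_N$ whenever $\|\mathbf{x}-\mathbf{x}^*_h\|_\infty\le z_h\delta_N$, and equal to a fixed predefined policy otherwise. Gaussian stochastic system: $\tilde{\mathbf{X}}_1=\mathbf{x}_{\mathrm{ini}}$; under action $\mathbf{y}_h$, $\tilde{\mathbf{X}}_{h+1}=\mathrm{Proj}_{\Delta^S}(\phi_h(\mathbf{y}_h)+\mathbf{Z}_h/\sqrt N)$ (Euclidean projection onto the simplex), $\mathbf{Z}_h\sim\mathcal{N}(\mathbf{0},\Gamma_h(\mathbf{y}^*_h))$ independent across $h$, $\Gamma_h(\mathbf{y}^*_h)=\sum_{s,a}y^*_h(s,a)\Sigma_h(s,a)$, $\Sigma_h(s,a)_{ij}=\mathbf{P}_h(i\mid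 s,a)(\mathbf{1}[i=j]-\mathbf{P}_h(j\mid s,a))$. $\mathcal{O}(N^{-\log N})$ hides constants independent of $N$. *)

theory Defs
  imports "HOL-Analysis.Analysis" "HOL-Probability.Probability"
begin

text \<open>States: a finite type 's (so S = CARD('s)); actions: bool (True = activate = action 1).
  Kernels: P h s a :: 's pmf, i.e. P_h(s' | s,a) = pmf (P h s a) s'.\<close>

definition linf :: "real^'n \<Rightarrow> real" where
  "linf x = Max (range (\<lambda>i. \<bar>x $ i\<bar>))"

definition prob_simplex :: "(real^'n) set" where
  "prob_simplex = {x. (\<forall>i. 0 \<le> x $ i) \<and> (\<Sum>i\<in>UNIV. x $ i) = 1}"

definition simplexN :: "nat \<Rightarrow> (real^'n) set" where
  "simplexN N = {x \<in> prob_simplex. \<forall>i. real N * x $ i \<in> \<nat>}"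

definition proj_simplex :: "real^'n \<Rightarrow> real^'n" where
  "proj_simplex v = closest_point prob_simplex v"

definition feasible_action :: "real \<Rightarrow> real^'s::finite \<Rightarrow> real^('s \<times> bool) \<Rightarrow> bool" where
  "feasible_action \<alpha> x y \<longleftrightarrow> (\<forall>sa. 0 \<le> y $ sa)
     \<and> (\<forall>s. y $ (s, False) + y $ (s, True) = x $ s)
     \<and> (\<Sum>s\<in>UNIV. y $ (s, True)) = \<alpha>"

definition phi :: "(nat \<Rightarrow> 's::finite \<Rightarrow> bool \<Rightarrow> 's pmf) \<Rightarrow> nat \<Rightarrow> real^('s \<times> bool) \<Rightarrow> real^'s" where
  "phi P h y = (\<chi> s'. \<Sum>sa\<in>UNIV. y $ sa * pmf (P h (fst sa) (snd sa)) s')"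

definition lp_feasible ::
  "(nat \<Rightarrow> 's::finite \<Rightarrow> bool \<Rightarrow> 's pmf) \<Rightarrow> real \<Rightarrow> nat \<Rightarrow> real^'s
     \<Rightarrow> (nat \<Rightarrow> real^'s) \<Rightarrow> (nat \<Rightarrow> real^('s \<times> bool)) \<Rightarrow> bool" where
  "lp_feasible P \<alpha> H xini x y \<longleftrightarrow> x 1 = xini
     \<and> (\<forall>h\<in>{1..H}. feasible_action \<alpha> (x h) (y h))
     \<and> (\<forall>h\<in>{1..<H}. x (Suc h) = phi P h (y h))"

definition lp_obj :: "(nat \<Rightarrow> 's::finite \<Rightarrow> bool \<Rightarrow> real) \<Rightarrow> nat \<Rightarrow> (nat \<Rightarrow> real^('s \<times> bool)) \<Rightarrow> real" where
  "lp_obj r H y = (\<Sum>h=1..H. \<Sum>sa\<in>UNIV. r h (fst sa) (snd sa) * y h $ sa)"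

definition lp_optimal :: "(nat \<Rightarrow> 's::finite \<Rightarrow> bool \<Rightarrow> 's pmf) \<Rightarrow> (nat \<Rightarrow> 's \<Rightarrow> bool \<Rightarrow> real) \<Rightarrow> real \<Rightarrow> nat \<Rightarrow> real^'s \<Rightarrow> (nat \<Rightarrow> real^'s) \<Rightarrow> (nat \<Rightarrow> real^('s \<times> bool)) \<Rightarrow> bool" where
  "lp_optimal P r \<alpha> H xini xs ys \<longleftrightarrow> lp_feasible P \<alpha> H xini xs ys
     \<and> (\<forall>x y. lp_feasible P \<alpha> H xini x y \<longrightarrow> lp_obj r H y \<le> lp_obj r H ys)"

definition linf_seq :: "nat \<Rightarrow> (nat \<Rightarrow> real^'n) \<Rightarrow> real" where
  "linf_seq H y = Max ((\<lambda>h. linf (y h)) ` {1..H})"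

definition sigma_gap :: "(nat \<Rightarrow> 's::finite \<Rightarrow> bool \<Rightarrow> 's pmf) \<Rightarrow> (nat \<Rightarrow> 's \<Rightarrow> bool \<Rightarrow> real) \<Rightarrow> real \<Rightarrow> nat \<Rightarrow> real^'s \<Rightarrow> (nat \<Rightarrow> real^('s \<times> bool)) \<Rightarrow> real" where
  "sigma_gap P r \<alpha> H xini ys = Inf {(lp_obj r H ys - lp_obj r H y) / linf_seq H (\<lambda>h. ys h - y h) | y.
      (\<exists>x. lp_feasible P \<alpha> H xini x y) \<and> (\<exists>h\<in>{1..H}. y h \<noteq> ys h)}"

definition r_max :: "(nat \<Rightarrow> 's \<Rightarrow> bool \<Rightarrow> real) \<Rightarrow> nat \<Rightarrow> real" where
  "r_max r H = Max {r h s a | h s a. h \<in> {1..H}}"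

definition delta_N :: "nat \<Rightarrow> real" where
  "delta_N N = 2 * ln (real N) / sqrt (real N)"

definition lip :: "(nat \<Rightarrow> 's::finite \<Rightarrow> bool \<Rightarrow> 's pmf) \<Rightarrow> nat \<Rightarrow> real" where
  "lip P h = Inf {L. 0 \<le> L \<and> (\<forall>y y'. linf (phi P h y - phi P h y') \<le> L * linf (y - y'))}"

definition kappa :: "(nat \<Rightarrow> 's::finite \<Rightarrow> bool \<Rightarrow> 's pmf) \<Rightarrow> (nat \<Rightarrow> 's \<Rightarrow> bool \<Rightarrow> real) \<Rightarrow> real \<Rightarrow> nat \<Rightarrow> real^'s \<Rightarrow> (nat \<Rightarrow> real^('s \<times> bool)) \<Rightarrow> real" where
  "kappa P r \<alpha> H xini ys = max (2 + 6 * real CARD('s))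
      (3 + 2 * r_max r H * real H * real CARD('s) / sigma_gap P r \<alpha> H xini ys)"

text \<open>zz k = z_{k+1}\<close>
primrec zz :: "real \<Rightarrow> (nat \<Rightarrow> real) \<Rightarrow> nat \<Rightarrow> real \<Rightarrow> real" where
  "zz S L 0 \<kappa> = 1"
| "zz S L (Suc k) \<kappa> = sqrt S * (\<kappa> * L (Suc k) * zz S L k \<kappa> + 1)"

definition zcoef :: "(nat \<Rightarrow> 's::finite \<Rightarrow> bool \<Rightarrow> 's pmf) \<Rightarrow> (nat \<Rightarrow> 's \<Rightarrow> bool \<Rightarrow> real) \<Rightarrow> real \<Rightarrow> nat \<Rightarrow> real^'s \<Rightarrow> (nat \<Rightarrow> real^('s \<times> bool)) \<Rightarrow> nat \<Rightarrow> real" where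
  "zcoef P r \<alpha> H xini ys h =
     zz (real CARD('s)) (lip P) (h - 1) (kappa P r \<alpha> H xini ys)"

definition in_Pi_delta where
  "in_Pi_delta D H \<kappa> z \<delta> xs ys pi0 (\<pi> :: real^'s \<Rightarrow> nat \<Rightarrow> real^('s \<times> bool)) \<longleftrightarrow>
     (\<forall>h\<in>{1..H}. \<forall>x\<in>D.
        (linf (x - xs h) \<le> z h * \<delta> \<longrightarrow> linf (\<pi> x h - ys h) \<le> \<kappa> * z h * \<delta>)
      \<and> (\<not> linf (x - xs h) \<le> z h * \<delta> \<longrightarrow> \<pi> x h = pi0 x h))"

definition admissible_N where
  "admissible_N \<alpha> H N (\<pi> :: real^'s \<Rightarrow> nat \<Rightarrow> real^('s \<times> bool)) \<longleftrightarrow>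
     (\<forall>h\<in>{1..H}. \<forall>x\<in>simplexN N. feasible_action \<alpha> x (\<pi> x h) \<and> (\<forall>sa. real N * \<pi> x h $ sa \<in> \<nat>))"

definition admissible_G where
  "admissible_G \<alpha> H (\<pi> :: real^'s \<Rightarrow> nat \<Rightarrow> real^('s \<times> bool)) \<longleftrightarrow>
     (\<forall>h\<in>{1..H}. \<forall>x\<in>prob_simplex. feasible_action \<alpha> x (\<pi> x h))
     \<and> (\<forall>h. (\<lambda>x. \<pi> x h) \<in> borel_measurable borel)"

text \<open>Counts of n i.i.d. draws from p, i.e. Multinomial(n, p).\<close>
primrec multinomial_pmf :: "nat \<Rightarrow> 's pmf \<Rightarrow> ('s \<Rightarrow> nat) pmf" where
  "multinomial_pmf 0 p = return_pmf (\<lambda>_. 0)"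
| "multinomial_pmf (Suc n) p =
     bind_pmf (multinomial_pmf n p) (\<lambda>c. map_pmf (\<lambda>s. c(s := Suc (c s))) p)"

definition nstep :: "(nat \<Rightarrow> 's::finite \<Rightarrow> bool \<Rightarrow> 's pmf) \<Rightarrow> nat \<Rightarrow> nat \<Rightarrow> real^('s \<times> bool) \<Rightarrow> (real^'s) pmf" where
  "nstep P N h y =
     map_pmf (\<lambda>U. \<chi> s'. (\<Sum>sa\<in>UNIV. real (U sa s')) / real N)
       (Pi_pmf UNIV (\<lambda>_. 0)
          (\<lambda>sa. multinomial_pmf (nat \<lfloor>real N * y $ sa\<rfloor>) (P h (fst sa) (snd sa))))"

text \<open>ntraj ... k: joint law of (X_1, ..., X_{k+1}) (other entries are irrelevant).\<close>
primrec ntraj :: "(nat \<Rightarrow> 's::finite \<Rightarrow> bool \<Rightarrow> 's pmf) \<Rightarrow> nat \<Rightarrow> (real^'s \<Rightarrow> nat \<Rightarrow> real^('s \<times> bool))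
    \<Rightarrow> real^'s \<Rightarrow> nat \<Rightarrow> (nat \<Rightarrow> real^'s) pmf" where
  "ntraj P N \<pi> xini 0 = return_pmf (\<lambda>_. xini)"
| "ntraj P N \<pi> xini (Suc k) =
     bind_pmf (ntraj P N \<pi> xini k)
       (\<lambda>X. map_pmf (\<lambda>x'. X(Suc (Suc k) := x')) (nstep P N (Suc k) (\<pi> (X (Suc k)) (Suc k))))"

definition Sigma_mat :: "(nat \<Rightarrow> 's::finite \<Rightarrow> bool \<Rightarrow> 's pmf) \<Rightarrow> nat \<Rightarrow> 's \<times> bool \<Rightarrow> real^'s^'s" where
  "Sigma_mat P h sa = (\<chi> i j. pmf (P h (fst sa) (snd sa)) i *
       ((if i = j then 1 else 0) - pmf (P h (fst sa) (snd sa)) j))"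

definition Gamma_mat :: "(nat \<Rightarrow> 's::finite \<Rightarrow> bool \<Rightarrow> 's pmf) \<Rightarrow> nat \<Rightarrow> real^('s \<times> bool) \<Rightarrow> real^'s^'s" where
  "Gamma_mat P h y = (\<Sum>sa\<in>UNIV. y $ sa *\<^sub>R Sigma_mat P h sa)"

text \<open>Standard Gaussian on real^'n, and the centred Gaussian with covariance Gamma,
  realised as A w with A A^T = Gamma (the law does not depend on the choice of A).\<close>
definition std_gaussian :: "(real^'n) measure" where
  "std_gaussian = density lborel (\<lambda>w. ennreal (\<Prod>i\<in>UNIV. std_normal_density (w $ i)))"

definition gaussian :: "real^'n^'n \<Rightarrow> (real^'n) measure" where
  "gaussian \<Gamma> = distr std_gaussian borel
     (\<lambda>w. (SOME A :: real^'n^'n. A ** transpose A = \<Gamma>) *v w)"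

text \<open>Probability space of the noises Z_1, ..., Z_{H-1} (independent), omega h = Z_h.\<close>
definition gnoise_space where
  "gnoise_space P H ys =
     PiM {1..<H} (\<lambda>h. gaussian (Gamma_mat P h (ys h)))"

text \<open>gtraj ... omega h = state at time h (h \<ge> 1).\<close>
primrec gtraj :: "(nat \<Rightarrow> 's::finite \<Rightarrow> bool \<Rightarrow> 's pmf) \<Rightarrow> nat \<Rightarrow> (real^'s \<Rightarrow> nat \<Rightarrow> real^('s \<times> bool))
    \<Rightarrow> real^'s \<Rightarrow> (nat \<Rightarrow> real^'s) \<Rightarrow> nat \<Rightarrow> real^'s" where
  "gtraj P N \<pi> xini \<omega> 0 = xini"
| "gtraj P N \<pi> xini \<omega> (Suc h) =
     (if h = 0 then xini
      else proj_simplex (phi P h (\<pi> (gtraj P N \<pi> xini \<omega> h) h) + (1 / sqrt (real N)) *\<^sub>R \<omega> h))"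

end

theory Submission
  imports Defs "HOL-Real_Asymp.Real_Asymp"
begin

text \<open>On the event that every one-step noise has sup norm at most delta_N, each state stays in
  its tube of radius z_h delta_N around x*_h: a step moves the distance to the fluid trajectory by
  at most the noise plus L_h times the action error kappa z_h delta_N of a policy in Pi_delta, and
  in the Gaussian system the Euclidean projection onto the simplex is 1-Lipschitz, at the price of
  a factor sqrt S between the two norms. A coordinate of the N-system noise is a centred sum of N
  independent indicators, and a coordinate of the Gaussian noise has variance at most 1/4; by
  Chernoff bounds each exceeds delta_N (resp. 2 log N before scaling by 1/sqrt N) with probability
  at most 2 exp (-8 log^2 N), which is at most 2 N^(-log N). A union bound over coordinates and
  steps gives the unconditional bounds.

  For the conditional bounds, the Gaussian noise almost surely lies in the range of a square root
  of Gamma_h, so it sums to zero and vanishes in the coordinates where x*_(h+1) does. Hence the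
  unprojected next state sums to one, the projection leaves it unchanged iff it is nonnegative,
  and inside the tube it is nonnegative as soon as delta_N is small compared with the positive
  entries of x*_(h+1).\<close>

section \<open>The sup norm and the probability simplex\<close>

lemma linf_le_iff: "linf (x::real^'n) \<le> c \<longleftrightarrow> (\<forall>i. \<bar>x $ i\<bar> \<le> c)"
  unfolding linf_def by (subst Max_le_iff) auto

lemma abs_le_linf: "\<bar>(x::real^'n) $ i\<bar> \<le> linf x"
  unfolding linf_def by (rule Max_ge) auto

lemma linf_nonneg: "0 \<le> linf (x::real^'n)"
  using abs_le_linf[of x undefined] by linarith

lemma linf_zero [simp]: "linf (0::real^'n) = 0"
  using linf_le_iff[of "0::real^'n" 0] linf_nonneg[of "0::real^'n"] by auto

lemma linf_triangle: "linf ((x::real^'n) + y) \<le> linf x + linf y"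
  unfolding linf_le_iff using abs_le_linf[of x] abs_le_linf[of y]
  by (metis abs_triangle_ineq add_mono order_trans vector_add_component)

lemma linf_scaleR: "linf (c *\<^sub>R (x::real^'n)) = \<bar>c\<bar> * linf x"
proof (rule antisym)
  show "linf (c *\<^sub>R x) \<le> \<bar>c\<bar> * linf x"
    unfolding linf_le_iff by (auto simp: abs_mult intro!: mult_left_mono abs_le_linf)
  show "\<bar>c\<bar> * linf x \<le> linf (c *\<^sub>R x)"
  proof (cases "c = 0")
    case True
    then show ?thesis using linf_nonneg by simp
  next
    case False
    have "linf x \<le> linf (c *\<^sub>R x) / \<bar>c\<bar>"
      unfolding linf_le_iff using False abs_le_linf[of "c *\<^sub>R x"]
      by (auto simp: abs_mult le_divide_eq mult.commute)
    then show ?thesis using False by (simp add: le_divide_eq mult.commute)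
  qed
qed

lemma linf_le_norm: "linf (x::real^'n) \<le> norm x"
  unfolding linf_le_iff by (simp add: component_le_norm_cart)

lemma norm_le_sqrt_card_linf: "norm (x::real^'n) \<le> sqrt (real CARD('n)) * linf x"
proof -
  have "norm x = sqrt (\<Sum>i\<in>UNIV. (x $ i)\<^sup>2)"
    by (simp add: norm_vec_def L2_set_def)
  also have "\<dots> \<le> sqrt (\<Sum>i\<in>(UNIV::'n set). (linf x)\<^sup>2)"
    by (intro real_sqrt_le_mono sum_mono) (metis abs_le_linf abs_ge_zero power2_abs power_mono)
  also have "\<dots> = sqrt (real CARD('n)) * linf x"
    using linf_nonneg[of x] by (simp add: real_sqrt_mult)
  finally show ?thesis .
qed

lemma borel_measurable_linf [measurable]: "(linf :: real^'n \<Rightarrow> real) \<in> borel_measurable borel"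
  unfolding linf_def by (rule borel_measurable_Max) auto

lemma borel_measurable_vec_nth [measurable]: "(\<lambda>x::real^'n. x $ i) \<in> borel_measurable borel"
  by (intro borel_measurable_continuous_onI continuous_intros)

lemma prob_simplex_nonempty: "(prob_simplex :: (real^'n) set) \<noteq> {}"
proof -
  have "axis undefined 1 \<in> (prob_simplex :: (real^'n) set)"
    by (simp add: prob_simplex_def axis_def)
  then show ?thesis by blast
qed

lemma convex_prob_simplex: "convex (prob_simplex :: (real^'n) set)"
  unfolding convex_def prob_simplex_def
  by (auto simp: sum.distrib sum_distrib_left[symmetric] algebra_simps)

lemma closed_prob_simplex: "closed (prob_simplex :: (real^'n) set)"
proof -
  have "prob_simplex = (\<Inter>i. {x::real^'n. 0 \<le> x $ i}) \<inter> {x. (\<Sum>i\<in>UNIV. x $ i) = 1}"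
    unfolding prob_simplex_def by auto
  moreover have "closed {x::real^'n. (\<Sum>i\<in>UNIV. x $ i) = 1}"
    by (intro closed_Collect_eq continuous_intros)
  moreover have "closed {x::real^'n. 0 \<le> x $ i}" for i
    by (intro closed_Collect_le continuous_intros)
  ultimately show ?thesis by (metis closed_INT closed_Int)
qed

lemma proj_simplex_in_prob_simplex: "proj_simplex (v::real^'n) \<in> prob_simplex"
  unfolding proj_simplex_def
  by (rule closest_point_in_set[OF closed_prob_simplex prob_simplex_nonempty])

lemma proj_simplex_eq_iff: "proj_simplex (v::real^'n) = v \<longleftrightarrow> v \<in> prob_simplex"
  unfolding proj_simplex_def
  by (rule closest_point_refl[OF closed_prob_simplex prob_simplex_nonempty])

lemma dist_proj_simplex_le: "dist (proj_simplex (v::real^'n)) (proj_simplex w) \<le> dist v w"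
  unfolding proj_simplex_def
  by (rule closest_point_lipschitz[OF convex_prob_simplex closed_prob_simplex prob_simplex_nonempty])

lemma borel_measurable_proj_simplex [measurable]:
  "(proj_simplex :: real^'n \<Rightarrow> _) \<in> borel_measurable borel"
  unfolding proj_simplex_def
  by (intro borel_measurable_continuous_onI continuous_on_closest_point
      convex_prob_simplex closed_prob_simplex prob_simplex_nonempty)

section \<open>The fluid transition map\<close>

lemma phi_diff: "phi P h y - phi P h y' = phi P h (y - y')"
  unfolding phi_def by (simp add: vec_eq_iff sum_subtractf[symmetric] algebra_simps)

lemma phi_nonneg: "(\<And>sa. 0 \<le> y $ sa) \<Longrightarrow> 0 \<le> phi P h y $ i"
  unfolding phi_def by (auto intro!: sum_nonneg)

lemma sum_phi: "(\<Sum>i\<in>UNIV. phi P h y $ i) = (\<Sum>sa\<in>UNIV. y $ sa)"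
proof -
  have "(\<Sum>i\<in>UNIV. phi P h y $ i)
      = (\<Sum>sa\<in>UNIV. y $ sa * (\<Sum>i\<in>UNIV. pmf (P h (fst sa) (snd sa)) i))"
    unfolding phi_def by (simp add: sum_distrib_left) (rule sum.swap)
  then show ?thesis by (simp add: sum_pmf_eq_1)
qed

lemma borel_measurable_phi [measurable]: "phi P h \<in> borel_measurable borel"
  unfolding phi_def by (intro borel_measurable_continuous_onI continuous_intros)

lemma linf_phi_le:
  fixes P :: "nat \<Rightarrow> 's::finite \<Rightarrow> bool \<Rightarrow> 's pmf"
  shows "linf (phi P h y) \<le> real CARD('s \<times> bool) * linf y"
proof (unfold linf_le_iff, intro allI)
  fix i
  have "\<bar>phi P h y $ i\<bar> \<le> (\<Sum>sa\<in>UNIV. \<bar>y $ sa * pmf (P h (fst sa) (snd sa)) i\<bar>)"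
    unfolding phi_def by (simp add: sum_abs)
  also have "\<dots> \<le> (\<Sum>sa\<in>(UNIV::('s \<times> bool) set). linf y)"
  proof (intro sum_mono)
    fix sa
    have "\<bar>y $ sa\<bar> * pmf (P h (fst sa) (snd sa)) i \<le> linf y * 1"
      by (intro mult_mono abs_le_linf pmf_le_1 linf_nonneg) auto
    then show "\<bar>y $ sa * pmf (P h (fst sa) (snd sa)) i\<bar> \<le> linf y"
      by (simp add: abs_mult)
  qed
  finally show "\<bar>phi P h y $ i\<bar> \<le> real CARD('s \<times> bool) * linf y" by simp
qed

lemma lip_candidates_nonempty:
  fixes P :: "nat \<Rightarrow> 's::finite \<Rightarrow> bool \<Rightarrow> 's pmf"
  shows "{L. 0 \<le> L \<and> (\<forall>y y'. linf (phi P h y - phi P h y') \<le> L * linf (y - y'))} \<noteq> {}"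
proof -
  have "\<forall>y y'. linf (phi P h y - phi P h y') \<le> real CARD('s \<times> bool) * linf (y - y')"
    using linf_phi_le[of P h] by (simp add: phi_diff)
  then show ?thesis
    by (intro ex_in_conv[THEN iffD1] exI[of _ "real CARD('s \<times> bool)"]) auto
qed

lemma lip_nonneg: "0 \<le> lip P h"
  unfolding lip_def by (rule cInf_greatest[OF lip_candidates_nonempty]) auto

lemma linf_phi_diff_le_lip: "linf (phi P h y - phi P h y') \<le> lip P h * linf (y - y')"
proof (cases "linf (y - y') = 0")
  case True
  then have "y = y'"
    using linf_le_iff[of "y - y'" 0] by (auto simp: vec_eq_iff)
  then show ?thesis by simp
next
  case False
  then have pos: "0 < linf (y - y')"
    using linf_nonneg[of "y - y'"] by auto
  have "linf (phi P h y - phi P h y') / linf (y - y') \<le> lip P h"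
    unfolding lip_def
  proof (rule cInf_greatest[OF lip_candidates_nonempty], safe)
    fix L assume "\<forall>y y'. linf (phi P h y - phi P h y') \<le> L * linf (y - y')"
    then show "linf (phi P h y - phi P h y') / linf (y - y') \<le> L"
      using pos by (simp add: divide_le_eq)
  qed
  then show ?thesis
    using pos by (simp add: divide_le_eq mult.commute)
qed

lemma feasible_action_sum:
  assumes "feasible_action \<alpha> x y" "x \<in> prob_simplex"
  shows "(\<Sum>sa\<in>UNIV. y $ sa) = 1"
proof -
  have "(\<Sum>s\<in>UNIV. \<Sum>b\<in>UNIV. y $ (s, b)) = (\<Sum>sa\<in>UNIV \<times> UNIV. y $ sa)"
    by (simp add: sum.cartesian_product)
  then have "(\<Sum>sa\<in>UNIV. y $ sa) = (\<Sum>s\<in>UNIV. \<Sum>b\<in>UNIV. y $ (s, b))"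
    by simp
  also have "\<dots> = (\<Sum>s\<in>UNIV. x $ s)"
    using assms(1) unfolding feasible_action_def by (simp add: UNIV_bool add.commute)
  finally show ?thesis
    using assms(2) by (simp add: prob_simplex_def)
qed

lemma feasible_action_nonneg: "feasible_action \<alpha> x y \<Longrightarrow> 0 \<le> y $ sa"
  unfolding feasible_action_def by blast

lemma phi_in_prob_simplex:
  assumes "feasible_action \<alpha> x y" "x \<in> prob_simplex"
  shows "phi P h y \<in> prob_simplex"
  using feasible_action_sum[OF assms] phi_nonneg[OF feasible_action_nonneg[OF assms(1)]]
  unfolding prob_simplex_def by (simp add: sum_phi)

section \<open>The tubes around the fluid trajectory\<close>

lemma kappa_nonneg: "0 \<le> kappa P r \<alpha> H xini (ys :: nat \<Rightarrow> real^('s::finite \<times> bool))"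
  unfolding kappa_def by (simp add: le_max_iff_disj)

lemma zz_ge_1: "0 \<le> \<kappa> \<Longrightarrow> 1 \<le> S \<Longrightarrow> (\<And>k. 0 \<le> L k) \<Longrightarrow> 1 \<le> zz S L k \<kappa>"
proof (induction k)
  case (Suc k)
  have "1 * 1 \<le> sqrt S * (\<kappa> * L (Suc k) * zz S L k \<kappa> + 1)"
    using Suc by (intro mult_mono) auto
  then show ?case by simp
qed simp

lemma zcoef_ge_1: "1 \<le> zcoef P r \<alpha> H xini (ys :: nat \<Rightarrow> real^('s::finite \<times> bool)) h"
  unfolding zcoef_def by (intro zz_ge_1 kappa_nonneg lip_nonneg) auto

lemma zcoef_Suc:
  "1 \<le> h \<Longrightarrow> zcoef P r \<alpha> H xini (ys :: nat \<Rightarrow> real^('s::finite \<times> bool)) (Suc h)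
    = sqrt (real CARD('s)) * (kappa P r \<alpha> H xini ys * lip P h * zcoef P r \<alpha> H xini ys h + 1)"
  unfolding zcoef_def by (cases h) auto

lemma delta_N_nonneg: "0 \<le> delta_N N"
  unfolding delta_N_def by (cases N) auto

lemma delta_N_tendsto_0: "(\<lambda>N. delta_N N) \<longlonglongrightarrow> 0"
  unfolding delta_N_def by real_asymp

locale fluid_tube =
  fixes P :: "nat \<Rightarrow> 's::finite \<Rightarrow> bool \<Rightarrow> 's pmf" and \<alpha> :: real and H :: nat
    and xini :: "real^'s" and xs :: "nat \<Rightarrow> real^'s" and ys :: "nat \<Rightarrow> real^('s \<times> bool)"
    and \<kappa> :: real and z :: "nat \<Rightarrow> real"
  assumes H_pos: "1 \<le> H" and xini: "xini \<in> prob_simplex"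
    and feasible: "lp_feasible P \<alpha> H xini xs ys"
    and \<kappa>_nonneg: "0 \<le> \<kappa>" and z_nonneg: "\<And>h. 0 \<le> z h"
    and z_Suc: "\<And>h. h \<in> {1..<H} \<Longrightarrow> z (Suc h) = sqrt (real CARD('s)) * (\<kappa> * lip P h * z h + 1)"
begin

lemma xs_1: "xs 1 = xini"
  using feasible by (simp add: lp_feasible_def)

lemma xs_Suc: "h \<in> {1..<H} \<Longrightarrow> xs (Suc h) = phi P h (ys h)"
  using feasible by (simp add: lp_feasible_def)

lemma feasible_action_ys: "h \<in> {1..H} \<Longrightarrow> feasible_action \<alpha> (xs h) (ys h)"
  using feasible by (simp add: lp_feasible_def)

lemma xs_in_prob_simplex: "h \<in> {1..H} \<Longrightarrow> xs h \<in> prob_simplex"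
proof (induction h)
  case (Suc h)
  show ?case
  proof (cases "h = 0")
    case True
    then show ?thesis using xs_1 xini by simp
  next
    case False
    then have "h \<in> {1..<H}" "h \<in> {1..H}" using Suc.prems by auto
    then show ?thesis
      using phi_in_prob_simplex[OF feasible_action_ys Suc.IH] by (simp add: xs_Suc)
  qed
qed simp

lemma ys_nonneg: "h \<in> {1..H} \<Longrightarrow> 0 \<le> ys h $ sa"
  using feasible_action_ys feasible_action_nonneg by blast

lemma ys_sum: "h \<in> {1..H} \<Longrightarrow> (\<Sum>sa\<in>UNIV. ys h $ sa) = 1"
  using feasible_action_ys xs_in_prob_simplex feasible_action_sum by blast

lemma linf_phi_action_le:
  assumes "in_Pi_delta D H \<kappa> z \<delta> xs ys pi0 \<pi>" "X \<in> D" "h \<in> {1..<H}"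
    and "linf (X - xs h) \<le> z h * \<delta>"
  shows "linf (phi P h (\<pi> X h) - xs (Suc h)) \<le> lip P h * (\<kappa> * z h * \<delta>)"
proof -
  have "linf (\<pi> X h - ys h) \<le> \<kappa> * z h * \<delta>"
    using assms unfolding in_Pi_delta_def by auto
  then show ?thesis
    using linf_phi_diff_le_lip[of P h "\<pi> X h" "ys h"] lip_nonneg[of P h] xs_Suc[OF assms(3)]
    by (metis mult_left_mono order_trans)
qed

lemma linf_step_le:
  assumes "in_Pi_delta D H \<kappa> z \<delta> xs ys pi0 \<pi>" "X \<in> D" "h \<in> {1..<H}"
    and "linf (X - xs h) \<le> z h * \<delta>" "linf w \<le> \<delta>"
  shows "linf (phi P h (\<pi> X h) + w - xs (Suc h)) \<le> (\<kappa> * lip P h * z h + 1) * \<delta>"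
proof -
  have "linf (phi P h (\<pi> X h) + w - xs (Suc h)) \<le> linf w + linf (phi P h (\<pi> X h) - xs (Suc h))"
    using linf_triangle[of w "phi P h (\<pi> X h) - xs (Suc h)"] by (simp add: algebra_simps)
  also have "\<dots> \<le> \<delta> + lip P h * (\<kappa> * z h * \<delta>)"
    using linf_phi_action_le[OF assms(1-4)] assms(5) by simp
  finally show ?thesis by (simp add: algebra_simps)
qed

lemma step_factor_le_z_Suc:
  assumes "h \<in> {1..<H}" "0 \<le> \<delta>"
  shows "(\<kappa> * lip P h * z h + 1) * \<delta> \<le> z (Suc h) * \<delta>"
proof -
  have "0 \<le> (\<kappa> * lip P h * z h + 1) * \<delta>"
    using assms(2) \<kappa>_nonneg z_nonneg[of h] lip_nonneg[of P h] by simp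
  then have "1 * ((\<kappa> * lip P h * z h + 1) * \<delta>) \<le> sqrt (real CARD('s)) * ((\<kappa> * lip P h * z h + 1) * \<delta>)"
    by (intro mult_right_mono) auto
  then show ?thesis
    using z_Suc[OF assms(1)] by (simp add: mult.assoc)
qed

lemma tube_step:
  assumes "in_Pi_delta D H \<kappa> z \<delta> xs ys pi0 \<pi>" "X \<in> D" "h \<in> {1..<H}"
    and "linf (X - xs h) \<le> z h * \<delta>" "linf (X' - phi P h (\<pi> X h)) \<le> \<delta>" "0 \<le> \<delta>"
  shows "linf (X' - xs (Suc h)) \<le> z (Suc h) * \<delta>"
  using linf_step_le[OF assms(1-5)] step_factor_le_z_Suc[OF assms(3,6)] by simp

lemma tube_step_proj:
  assumes "in_Pi_delta D H \<kappa> z \<delta> xs ys pi0 \<pi>" "X \<in> D" "h \<in> {1..<H}"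
    and "linf (X - xs h) \<le> z h * \<delta>" "linf w \<le> \<delta>"
  shows "linf (proj_simplex (phi P h (\<pi> X h) + w) - xs (Suc h)) \<le> z (Suc h) * \<delta>"
proof -
  let ?v = "phi P h (\<pi> X h) + w"
  have "xs (Suc h) \<in> prob_simplex"
    using assms(3) by (intro xs_in_prob_simplex) auto
  then have "proj_simplex (xs (Suc h)) = xs (Suc h)"
    by (simp add: proj_simplex_eq_iff)
  then have "linf (proj_simplex ?v - xs (Suc h)) \<le> dist (proj_simplex ?v) (proj_simplex (xs (Suc h)))"
    by (simp add: dist_norm linf_le_norm)
  also have "\<dots> \<le> dist ?v (xs (Suc h))"
    by (rule dist_proj_simplex_le)
  also have "\<dots> \<le> sqrt (real CARD('s)) * linf (?v - xs (Suc h))"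
    unfolding dist_norm by (rule norm_le_sqrt_card_linf)
  also have "\<dots> \<le> sqrt (real CARD('s)) * ((\<kappa> * lip P h * z h + 1) * \<delta>)"
    by (intro mult_left_mono linf_step_le[OF assms]) auto
  also have "\<dots> = z (Suc h) * \<delta>"
    using z_Suc[OF assms(3)] by simp
  finally show ?thesis .
qed

end

section \<open>Concentration of the N-system\<close>

lemma (in prob_space) subgaussian_upper_tail:
  assumes [measurable]: "f \<in> borel_measurable M" and K: "0 < K" and t: "0 < t"
    and mgf: "\<And>l. (\<integral>\<^sup>+x. ennreal (exp (l * f x)) \<partial>M) \<le> ennreal (exp (K * l\<^sup>2 / 8))"
  shows "prob {x\<in>space M. t \<le> f x} \<le> exp (- 2 * t\<^sup>2 / K)"
proof -
  define s where "s = 4 * t / K"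
  have s: "0 < s"
    using K t by (simp add: s_def)
  have "emeasure M {x\<in>space M. t \<le> f x}
      \<le> ennreal (exp (-s * t)) * (\<integral>\<^sup>+x. ennreal (exp (s * f x)) * indicator (space M) x \<partial>M)"
    by (rule Chernoff_ineq_nn_integral_ge[OF s]) auto
  also have "(\<integral>\<^sup>+x. ennreal (exp (s * f x)) * indicator (space M) x \<partial>M) = (\<integral>\<^sup>+x. ennreal (exp (s * f x)) \<partial>M)"
    by (intro nn_integral_cong) auto
  also have "ennreal (exp (-s * t)) * \<dots> \<le> ennreal (exp (-s * t)) * ennreal (exp (K * s\<^sup>2 / 8))"
    by (intro mult_left_mono mgf) auto
  also have "\<dots> = ennreal (exp (- 2 * t\<^sup>2 / K))"
  proof -
    have "-s * t + K * s\<^sup>2 / 8 = - 2 * t\<^sup>2 / K"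
      using K by (simp add: s_def power2_eq_square field_simps)
    then show ?thesis by (simp add: ennreal_mult'[symmetric] exp_add[symmetric])
  qed
  finally show ?thesis by (simp add: emeasure_eq_measure)
qed

lemma (in prob_space) subgaussian_tail:
  assumes [measurable]: "f \<in> borel_measurable M" and K: "0 < K" and t: "0 \<le> t"
    and mgf: "\<And>l. (\<integral>\<^sup>+x. ennreal (exp (l * f x)) \<partial>M) \<le> ennreal (exp (K * l\<^sup>2 / 8))"
  shows "prob {x\<in>space M. t < \<bar>f x\<bar>} \<le> 2 * exp (- 2 * t\<^sup>2 / K)"
proof (cases "t = 0")
  case True
  have "prob {x\<in>space M. t < \<bar>f x\<bar>} \<le> 1" by (rule prob_le_1)
  moreover have "1 \<le> 2 * exp (- 2 * t\<^sup>2 / K)" using True by simp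
  ultimately show ?thesis by linarith
next
  case False
  then have t': "0 < t" using t by simp
  have mgf': "(\<integral>\<^sup>+x. ennreal (exp (l * (- f x))) \<partial>M) \<le> ennreal (exp (K * l\<^sup>2 / 8))" for l
    using mgf[of "-l"] by simp
  have "prob {x\<in>space M. t < \<bar>f x\<bar>} \<le> prob ({x\<in>space M. t \<le> f x} \<union> {x\<in>space M. t \<le> - f x})"
    by (intro finite_measure_mono) auto
  also have "\<dots> \<le> prob {x\<in>space M. t \<le> f x} + prob {x\<in>space M. t \<le> - f x}"
    by (intro measure_subadditive) (auto simp: emeasure_eq_measure)
  also have "\<dots> \<le> exp (- 2 * t\<^sup>2 / K) + exp (- 2 * t\<^sup>2 / K)"
    by (intro add_mono subgaussian_upper_tail[OF _ K t'] mgf mgf') auto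
  finally show ?thesis by simp
qed

lemma indicator_centred_mgf_le:
  "(\<integral>\<^sup>+s. ennreal (exp (l * ((if s = s' then 1 else 0) - pmf p s'))) \<partial>measure_pmf p)
     \<le> ennreal (exp (l\<^sup>2 / 8))"
proof -
  have "(\<lambda>s. if s = s' then 1 else 0::real) = indicator {s'}"
    by (auto simp: indicator_def)
  then have E: "measure_pmf.expectation p (\<lambda>s. if s = s' then 1 else 0) = pmf p s'"
    using measure_pmf_single[of p s'] by simp
  consider "l > 0" | "l < 0" | "l = 0" by linarith
  then show ?thesis
  proof cases
    case 1
    interpret interval_bounded_random_variable "measure_pmf p" "\<lambda>s. if s = s' then 1 else (0::real)" 0 1
      by unfold_locales auto
    show ?thesis using Hoeffdings_lemma_nn_integral[OF 1] by (simp add: E)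
  next
    case 2
    interpret interval_bounded_random_variable "measure_pmf p"
      "\<lambda>s. - (if s = s' then 1 else (0::real))" "-1" 0
      by unfold_locales auto
    have "(\<integral>\<^sup>+ s. ennreal (exp ((-l) * ((- (if s = s' then 1 else 0)) -
            measure_pmf.expectation p (\<lambda>s. - (if s = s' then 1 else (0::real)))))) \<partial>measure_pmf p)
          \<le> ennreal (exp ((-l)\<^sup>2 * (0 - (-1))\<^sup>2 / 8))"
      using 2 by (intro Hoeffdings_lemma_nn_integral) auto
    then show ?thesis by (simp add: E algebra_simps)
  next
    case 3
    then show ?thesis by (simp add: measure_pmf.emeasure_space_1)
  qed
qed

lemma multinomial_count_mgf_le:
  "(\<integral>\<^sup>+c. ennreal (exp (l * (real (c s') - real n * pmf p s'))) \<partial>measure_pmf (multinomial_pmf n p))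
     \<le> ennreal (exp (real n * l\<^sup>2 / 8))"
proof (induction n)
  case (Suc n)
  let ?q = "pmf p s'"
  let ?F = "\<lambda>c. ennreal (exp (l * (real (c s') - real n * ?q)))"
  let ?G = "\<lambda>s. ennreal (exp (l * ((if s = s' then 1 else 0) - ?q)))"
  have step: "ennreal (exp (l * (real ((c(s := Suc (c s))) s') - real (Suc n) * ?q))) = ?F c * ?G s"
    for c :: "'a \<Rightarrow> nat" and s
    by (simp add: ennreal_mult'[symmetric] exp_add[symmetric] algebra_simps)
  have "(\<integral>\<^sup>+c. ennreal (exp (l * (real (c s') - real (Suc n) * ?q))) \<partial>measure_pmf (multinomial_pmf (Suc n) p))
      = (\<integral>\<^sup>+c. \<integral>\<^sup>+s. ?F c * ?G s \<partial>measure_pmf p \<partial>measure_pmf (multinomial_pmf n p))"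
    by (simp only: multinomial_pmf.simps nn_integral_bind_pmf nn_integral_map_pmf step)
  also have "\<dots> = (\<integral>\<^sup>+c. ?F c * (\<integral>\<^sup>+s. ?G s \<partial>measure_pmf p) \<partial>measure_pmf (multinomial_pmf n p))"
    by (simp add: nn_integral_cmult)
  also have "\<dots> \<le> (\<integral>\<^sup>+c. ?F c * ennreal (exp (l\<^sup>2 / 8)) \<partial>measure_pmf (multinomial_pmf n p))"
    by (intro nn_integral_mono mult_left_mono indicator_centred_mgf_le) auto
  also have "\<dots> = (\<integral>\<^sup>+c. ?F c \<partial>measure_pmf (multinomial_pmf n p)) * ennreal (exp (l\<^sup>2 / 8))"
    by (simp add: nn_integral_multc)
  also have "\<dots> \<le> ennreal (exp (real n * l\<^sup>2 / 8)) * ennreal (exp (l\<^sup>2 / 8))"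
    by (intro mult_right_mono Suc.IH) auto
  also have "\<dots> = ennreal (exp (real (Suc n) * l\<^sup>2 / 8))"
    by (simp add: ennreal_mult'[symmetric] exp_add[symmetric] algebra_simps add_divide_distrib)
  finally show ?case .
qed simp

lemma Pi_multinomial_mgf_le:
  fixes n :: "'k::finite \<Rightarrow> nat" and p :: "'k \<Rightarrow> 's pmf"
  shows "(\<integral>\<^sup>+U. ennreal (exp (l * (\<Sum>k\<in>UNIV. real (U k s') - real (n k) * pmf (p k) s')))
           \<partial>measure_pmf (Pi_pmf UNIV (\<lambda>_. 0) (\<lambda>k. multinomial_pmf (n k) (p k))))
     \<le> ennreal (exp (real (\<Sum>k\<in>UNIV. n k) * l\<^sup>2 / 8))"
proof -
  have "(\<integral>\<^sup>+U. ennreal (exp (l * (\<Sum>k\<in>UNIV. real (U k s') - real (n k) * pmf (p k) s')))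
           \<partial>measure_pmf (Pi_pmf UNIV (\<lambda>_. 0) (\<lambda>k. multinomial_pmf (n k) (p k))))
      = (\<integral>\<^sup>+U. (\<Prod>k\<in>UNIV. ennreal (exp (l * (real (U k s') - real (n k) * pmf (p k) s'))))
           \<partial>measure_pmf (Pi_pmf UNIV (\<lambda>_. 0) (\<lambda>k. multinomial_pmf (n k) (p k))))"
    by (simp add: sum_distrib_left exp_sum prod_ennreal)
  also have "\<dots> = (\<Prod>k\<in>UNIV. \<integral>\<^sup>+c. ennreal (exp (l * (real (c s') - real (n k) * pmf (p k) s')))
           \<partial>measure_pmf (multinomial_pmf (n k) (p k)))"
    by (rule nn_integral_prod_Pi_pmf) simp
  also have "\<dots> \<le> (\<Prod>k\<in>UNIV. ennreal (exp (real (n k) * l\<^sup>2 / 8)))"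
    by (intro prod_mono_ennreal multinomial_count_mgf_le)
  also have "\<dots> = ennreal (exp (real (\<Sum>k\<in>UNIV. n k) * l\<^sup>2 / 8))"
    by (simp add: prod_ennreal exp_sum[symmetric] sum_divide_distrib[symmetric] sum_distrib_right)
  finally show ?thesis .
qed

lemma sum_multinomial_counts:
  "c \<in> set_pmf (multinomial_pmf n (p :: 's::finite pmf)) \<Longrightarrow> (\<Sum>s\<in>UNIV. c s) = n"
proof (induction n arbitrary: c)
  case (Suc n)
  then obtain c0 s where c0: "c0 \<in> set_pmf (multinomial_pmf n p)" and c: "c = c0(s := Suc (c0 s))"
    by auto
  have "(\<Sum>s'\<in>UNIV. c s') = (\<Sum>s'\<in>UNIV. c0 s' + (if s' = s then 1 else 0))"
    unfolding c by (intro sum.cong) auto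
  also have "\<dots> = Suc n"
    using Suc.IH[OF c0] by (simp add: sum.distrib)
  finally show ?case .
qed simp

lemma of_nat_nat_floor_Nats: "x \<in> \<nat> \<Longrightarrow> real (nat \<lfloor>x\<rfloor>) = x"
  by (auto elim!: Nats_cases)

lemma nstep_counts:
  assumes "\<forall>sa. real N * y $ sa \<in> \<nat>" "(\<Sum>sa\<in>UNIV. y $ sa) = 1"
  shows "real (nat \<lfloor>real N * y $ sa\<rfloor>) = real N * y $ sa"
    and "real (\<Sum>sa\<in>UNIV. nat \<lfloor>real N * y $ sa\<rfloor>) = real N"
  using assms by (simp_all add: of_nat_nat_floor_Nats sum_distrib_left[symmetric])

lemma nstep_component_tail:
  fixes P :: "nat \<Rightarrow> 's::finite \<Rightarrow> bool \<Rightarrow> 's pmf" and y :: "real^('s \<times> bool)"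
  assumes N: "1 \<le> N" and y: "\<forall>sa. real N * y $ sa \<in> \<nat>" "(\<Sum>sa\<in>UNIV. y $ sa) = 1"
    and \<delta>: "0 \<le> \<delta>"
  shows "measure_pmf.prob (nstep P N h y) {X'. \<delta> < \<bar>(X' - phi P h y) $ s'\<bar>}
    \<le> 2 * exp (- 2 * real N * \<delta>\<^sup>2)"
proof -
  define n where "n = (\<lambda>sa. nat \<lfloor>real N * y $ sa\<rfloor>)"
  define Q where "Q = Pi_pmf UNIV (\<lambda>_. 0) (\<lambda>sa. multinomial_pmf (n sa) (P h (fst sa) (snd sa)))"
  define f where "f = (\<lambda>U. \<Sum>sa\<in>UNIV. real (U sa s') - real (n sa) * pmf (P h (fst sa) (snd sa)) s')"
  have "phi P h y $ s' = (\<Sum>sa\<in>UNIV. real (n sa) * pmf (P h (fst sa) (snd sa)) s') / real N"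
    using N nstep_counts(1)[OF y] by (simp add: phi_def n_def sum_divide_distrib)
  then have dev: "\<bar>(\<Sum>sa\<in>UNIV. real (U sa s')) / real N - phi P h y $ s'\<bar> = \<bar>f U\<bar> / real N" for U
    using N by (simp add: f_def sum_subtractf diff_divide_distrib[symmetric])
  have "measure_pmf.prob (nstep P N h y) {X'. \<delta> < \<bar>(X' - phi P h y) $ s'\<bar>}
      = measure_pmf.prob Q {U. \<delta> < \<bar>(\<Sum>sa\<in>UNIV. real (U sa s')) / real N - phi P h y $ s'\<bar>}"
    by (simp add: nstep_def Q_def n_def)
  also have "{U. \<delta> < \<bar>(\<Sum>sa\<in>UNIV. real (U sa s')) / real N - phi P h y $ s'\<bar>}
      = {U \<in> space (measure_pmf Q). real N * \<delta> < \<bar>f U\<bar>}"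
    unfolding dev using N by (auto simp: less_divide_eq mult.commute)
  also have "measure_pmf.prob Q \<dots> \<le> 2 * exp (- 2 * (real N * \<delta>)\<^sup>2 / real N)"
  proof (rule measure_pmf.subgaussian_tail)
    show "(\<integral>\<^sup>+U. ennreal (exp (l * f U)) \<partial>measure_pmf Q) \<le> ennreal (exp (real N * l\<^sup>2 / 8))" for l
      using Pi_multinomial_mgf_le[where n=n and p="\<lambda>sa. P h (fst sa) (snd sa)" and l=l and s'=s']
      unfolding f_def Q_def n_def nstep_counts(2)[OF y] .
  qed (use N \<delta> in auto)
  also have "\<dots> = 2 * exp (- 2 * real N * \<delta>\<^sup>2)"
    using N by (simp add: power2_eq_square)
  finally show ?thesis .
qed

lemma nstep_tail:
  fixes P :: "nat \<Rightarrow> 's::finite \<Rightarrow> bool \<Rightarrow> 's pmf" and y :: "real^('s \<times> bool)"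
  assumes "1 \<le> N" "\<forall>sa. real N * y $ sa \<in> \<nat>" "(\<Sum>sa\<in>UNIV. y $ sa) = 1" "0 \<le> \<delta>"
  shows "measure_pmf.prob (nstep P N h y) {X'. \<not> linf (X' - phi P h y) \<le> \<delta>}
     \<le> real CARD('s) * (2 * exp (- 2 * real N * \<delta>\<^sup>2))"
proof -
  have "{X'. \<not> linf (X' - phi P h y) \<le> \<delta>} = (\<Union>s'. {X'. \<delta> < \<bar>(X' - phi P h y) $ s'\<bar>})"
    by (auto simp: linf_le_iff not_le)
  then have "measure_pmf.prob (nstep P N h y) {X'. \<not> linf (X' - phi P h y) \<le> \<delta>}
     \<le> (\<Sum>s'\<in>UNIV. measure_pmf.prob (nstep P N h y) {X'. \<delta> < \<bar>(X' - phi P h y) $ s'\<bar>})"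
    by (simp add: measure_pmf.finite_measure_subadditive_finite)
  also have "\<dots> \<le> (\<Sum>s'\<in>(UNIV::'s set). 2 * exp (- 2 * real N * \<delta>\<^sup>2))"
    by (intro sum_mono nstep_component_tail assms)
  finally show ?thesis by simp
qed

lemma nstep_in_simplexN:
  fixes P :: "nat \<Rightarrow> 's::finite \<Rightarrow> bool \<Rightarrow> 's pmf" and y :: "real^('s \<times> bool)"
  assumes N: "1 \<le> N" and y: "\<forall>sa. real N * y $ sa \<in> \<nat>" "(\<Sum>sa\<in>UNIV. y $ sa) = 1"
    and X': "X' \<in> set_pmf (nstep P N h y)"
  shows "X' \<in> simplexN N"
proof -
  define n where "n = (\<lambda>sa. nat \<lfloor>real N * y $ sa\<rfloor>)"
  obtain U where U: "U \<in> set_pmf (Pi_pmf UNIV (\<lambda>_. 0) (\<lambda>sa. multinomial_pmf (n sa) (P h (fst sa) (snd sa))))"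
    and X'U: "X' = (\<chi> s'. (\<Sum>sa\<in>UNIV. real (U sa s')) / real N)"
    using X' unfolding nstep_def n_def by auto
  have "U sa \<in> set_pmf (multinomial_pmf (n sa) (P h (fst sa) (snd sa)))" for sa
    using U by (cases sa) (auto simp: set_Pi_pmf PiE_dflt_def)
  then have counts: "(\<Sum>s'\<in>UNIV. U sa s') = n sa" for sa
    by (rule sum_multinomial_counts)
  have "(\<Sum>s'\<in>UNIV. X' $ s') = (\<Sum>sa\<in>UNIV. \<Sum>s'\<in>UNIV. real (U sa s')) / real N"
    unfolding X'U by (simp add: sum_divide_distrib[symmetric]) (rule disjI2, rule sum.swap)
  also have "\<dots> = 1"
    using N nstep_counts(2)[OF y] by (simp add: n_def counts flip: of_nat_sum)
  finally have "(\<Sum>s'\<in>UNIV. X' $ s') = 1" .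
  moreover have "real N * X' $ s' = real (\<Sum>sa\<in>UNIV. U sa s')" for s'
    unfolding X'U using N by simp
  ultimately show ?thesis
    unfolding simplexN_def prob_simplex_def X'U
    by (auto intro!: sum_nonneg divide_nonneg_nonneg simp flip: of_nat_sum)
qed

lemma exp_neg_two_N_delta_N_sq_le:
  assumes "1 \<le> N"
  shows "exp (- 2 * real N * (delta_N N)\<^sup>2) \<le> 1 / real N powr ln (real N)"
proof -
  have "exp (- 2 * real N * (delta_N N)\<^sup>2) = exp (- 8 * (ln (real N))\<^sup>2)"
    using assms by (simp add: delta_N_def power_divide power2_eq_square)
  also have "\<dots> \<le> exp (- (ln (real N))\<^sup>2)"
    by simp
  also have "\<dots> = 1 / real N powr ln (real N)"
    using assms by (simp add: powr_def exp_minus power2_eq_square field_simps)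
  finally show ?thesis .
qed

lemma admissible_N_action:
  assumes "admissible_N \<alpha> H N \<pi>" "h \<in> {1..H}" "x \<in> simplexN N"
  shows "\<forall>sa. real N * \<pi> x h $ sa \<in> \<nat>" and "(\<Sum>sa\<in>UNIV. \<pi> x h $ sa) = 1"
  using assms feasible_action_sum[of \<alpha> x "\<pi> x h"]
  unfolding admissible_N_def simplexN_def by auto

lemma ntraj_in_simplexN:
  assumes N: "1 \<le> N" and adm: "admissible_N \<alpha> H N \<pi>" and xini: "xini \<in> simplexN N"
  shows "k < H \<Longrightarrow> X \<in> set_pmf (ntraj P N \<pi> xini k) \<Longrightarrow> \<forall>h\<in>{1..Suc k}. X h \<in> simplexN N"
proof (induction k arbitrary: X)
  case (Suc k)
  then obtain X0 x' where X0: "X0 \<in> set_pmf (ntraj P N \<pi> xini k)"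
    and x': "x' \<in> set_pmf (nstep P N (Suc k) (\<pi> (X0 (Suc k)) (Suc k)))"
    and X: "X = X0(Suc (Suc k) := x')"
    by auto
  have IH: "\<forall>h\<in>{1..Suc k}. X0 h \<in> simplexN N"
    using Suc.IH[OF _ X0] Suc.prems by simp
  have "Suc k \<in> {1..H}" "X0 (Suc k) \<in> simplexN N"
    using Suc.prems IH by auto
  then have "x' \<in> simplexN N"
    using nstep_in_simplexN[OF N admissible_N_action[OF adm] x'] by simp
  then show ?case
    using IH X by (auto simp: le_Suc_eq)
qed (use xini in auto)

context fluid_tube
begin

abbreviation exits_tube :: "real \<Rightarrow> nat \<Rightarrow> (nat \<Rightarrow> real^'s) set" where
  "exits_tube \<delta> k \<equiv> {X. \<exists>h\<in>{1..Suc k}. \<not> linf (X h - xs h) \<le> z h * \<delta>}"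

lemma ntraj_Suc_exits_tube_le:
  assumes N: "1 \<le> N" and adm: "admissible_N \<alpha> H N \<pi>" and xiniN: "xini \<in> simplexN N"
    and Pi: "in_Pi_delta (simplexN N) H \<kappa> z \<delta> xs ys pi0 \<pi>" and \<delta>: "0 \<le> \<delta>"
    and k: "Suc k < H" and X: "X \<in> set_pmf (ntraj P N \<pi> xini k)"
  shows "emeasure (measure_pmf (map_pmf (\<lambda>x'. X(Suc (Suc k) := x'))
            (nstep P N (Suc k) (\<pi> (X (Suc k)) (Suc k))))) (exits_tube \<delta> (Suc k))
    \<le> indicator (exits_tube \<delta> k) X + ennreal (real CARD('s) * (2 * exp (- 2 * real N * \<delta>\<^sup>2)))"
proof (cases "X \<in> exits_tube \<delta> k")
  case True
  then show ?thesis
    by (simp add: measure_pmf.emeasure_le_1 add_increasing2)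
next
  case False
  let ?y = "\<pi> (X (Suc k)) (Suc k)"
  have hk: "Suc k \<in> {1..<H}" "Suc k \<in> {1..H}"
    using k by auto
  have XN: "X (Suc k) \<in> simplexN N"
    using ntraj_in_simplexN[OF N adm xiniN _ X] k by simp
  have "(\<lambda>x'. X(Suc (Suc k) := x')) -` exits_tube \<delta> (Suc k) \<subseteq> {x'. \<not> linf (x' - phi P (Suc k) ?y) \<le> \<delta>}"
    using tube_step[OF Pi XN hk(1) _ _ \<delta>] False by (auto simp: atLeastAtMostSuc_conv)
  then have "emeasure (measure_pmf (map_pmf (\<lambda>x'. X(Suc (Suc k) := x')) (nstep P N (Suc k) ?y)))
      (exits_tube \<delta> (Suc k))
      \<le> emeasure (measure_pmf (nstep P N (Suc k) ?y)) {x'. \<not> linf (x' - phi P (Suc k) ?y) \<le> \<delta>}"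
    by (simp only: emeasure_map_pmf) (intro emeasure_mono, simp_all)
  also have "\<dots> \<le> ennreal (real CARD('s) * (2 * exp (- 2 * real N * \<delta>\<^sup>2)))"
    unfolding measure_pmf.emeasure_eq_measure
    by (intro ennreal_leI nstep_tail[OF N admissible_N_action[OF adm hk(2) XN] \<delta>])
  finally show ?thesis
    by (simp add: add_increasing)
qed

lemma ntraj_exits_tube_le:
  assumes N: "1 \<le> N" and adm: "admissible_N \<alpha> H N \<pi>" and xiniN: "xini \<in> simplexN N"
    and Pi: "in_Pi_delta (simplexN N) H \<kappa> z \<delta> xs ys pi0 \<pi>" and \<delta>: "0 \<le> \<delta>"
  defines "\<epsilon> \<equiv> real CARD('s) * (2 * exp (- 2 * real N * \<delta>\<^sup>2))"
  shows "k < H \<Longrightarrow> emeasure (measure_pmf (ntraj P N \<pi> xini k)) (exits_tube \<delta> k) \<le> ennreal (real k * \<epsilon>)"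
proof (induction k)
  case 0
  then show ?case
    using xs_1 z_nonneg[of 1] \<delta> by simp
next
  case (Suc k)
  have "emeasure (measure_pmf (ntraj P N \<pi> xini (Suc k))) (exits_tube \<delta> (Suc k))
      = (\<integral>\<^sup>+X. emeasure (measure_pmf (map_pmf (\<lambda>x'. X(Suc (Suc k) := x'))
            (nstep P N (Suc k) (\<pi> (X (Suc k)) (Suc k))))) (exits_tube \<delta> (Suc k))
          \<partial>measure_pmf (ntraj P N \<pi> xini k))"
    by simp
  also have "\<dots> \<le> (\<integral>\<^sup>+X. indicator (exits_tube \<delta> k) X + ennreal \<epsilon> \<partial>measure_pmf (ntraj P N \<pi> xini k))"
    by (rule nn_integral_mono_AE, subst AE_measure_pmf_iff)
      (use ntraj_Suc_exits_tube_le[OF N adm xiniN Pi \<delta>] Suc.prems in \<open>simp add: \<epsilon>_def\<close>)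
  also have "\<dots> = emeasure (measure_pmf (ntraj P N \<pi> xini k)) (exits_tube \<delta> k) + ennreal \<epsilon>"
    by (simp add: nn_integral_add measure_pmf.emeasure_space_1)
  also have "\<dots> \<le> ennreal (real k * \<epsilon>) + ennreal \<epsilon>"
    using Suc by (intro add_right_mono) simp
  also have "\<dots> = ennreal (real (Suc k) * \<epsilon>)"
    by (simp add: \<epsilon>_def ennreal_plus[symmetric] algebra_simps del: ennreal_plus)
  finally show ?case .
qed

theorem N_system_tube_prob:
  assumes N: "1 \<le> N" and xiniN: "xini \<in> simplexN N" and adm: "admissible_N \<alpha> H N \<pi>"
    and Pi: "in_Pi_delta (simplexN N) H \<kappa> z (delta_N N) xs ys pi0 \<pi>"
  shows "measure_pmf.prob (ntraj P N \<pi> xini (H - 1)) {X. \<forall>h\<in>{1..H}. linf (X h - xs h) \<le> z h * delta_N N}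
     \<ge> 1 - 2 * real H * real CARD('s) / real N powr ln (real N)"
proof -
  let ?M = "ntraj P N \<pi> xini (H - 1)"
  let ?tube = "{X. \<forall>h\<in>{1..H}. linf (X h - xs h) \<le> z h * delta_N N}"
  let ?\<epsilon> = "real CARD('s) * (2 * exp (- 2 * real N * (delta_N N)\<^sup>2))"
  have "emeasure (measure_pmf ?M) (- ?tube) \<le> ennreal (real (H - 1) * ?\<epsilon>)"
    using ntraj_exits_tube_le[OF N adm xiniN Pi delta_N_nonneg, of "H - 1"] H_pos
    by (simp add: Compl_eq)
  then have "measure_pmf.prob ?M (UNIV - ?tube) \<le> real (H - 1) * ?\<epsilon>"
    by (simp add: measure_pmf.emeasure_eq_measure Compl_eq_Diff_UNIV)
  moreover have "measure_pmf.prob ?M (UNIV - ?tube) = 1 - measure_pmf.prob ?M ?tube"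
    using measure_pmf.prob_compl[of ?tube ?M] by simp
  ultimately have "1 - measure_pmf.prob ?M ?tube \<le> real (H - 1) * ?\<epsilon>"
    by simp
  also have "\<dots> \<le> real H * (real CARD('s) * (2 * (1 / real N powr ln (real N))))"
    by (intro mult_mono exp_neg_two_N_delta_N_sq_le N) auto
  finally show ?thesis by simp
qed

end

section \<open>The Gaussian noise\<close>

definition cov_factor :: "real^'n^'n \<Rightarrow> real^'n^'n" where
  "cov_factor \<Gamma> = (SOME A. A ** transpose A = \<Gamma>)"

lemma gaussian_eq_distr_cov_factor:
  "gaussian \<Gamma> = distr std_gaussian borel (\<lambda>w. cov_factor \<Gamma> *v w)"
  unfolding gaussian_def cov_factor_def ..

text \<open>A Gram matrix of finitely many vectors has a square factor: expand the vectors in an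
  orthonormal basis of their span, which has at most n elements.\<close>

lemma exists_square_gram_factor:
  fixes u :: "'k::finite \<Rightarrow> real^'n"
  shows "\<exists>A::real^'n^'n. \<forall>i j. (A ** transpose A) $ i $ j = (\<Sum>m\<in>UNIV. u m $ i * u m $ j)"
proof -
  define b where "b = (\<lambda>i. (\<chi> m. u m $ i) :: real^'k)"
  have G: "(\<Sum>m\<in>UNIV. u m $ i * u m $ j) = b i \<bullet> b j" for i j
    by (simp add: b_def inner_vec_def)
  define V where "V = span (range b)"
  obtain B where B: "B \<subseteq> V" "pairwise orthogonal B" "\<And>x. x \<in> B \<Longrightarrow> norm x = 1"
    "independent B" "card B = dim V" "span B = V"
    using orthonormal_basis_subspace[of V] unfolding V_def by (metis subspace_span)
  have finB: "finite B"
    using B(4) by (rule independent_imp_finite)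
  have "card B \<le> card (range b)"
    unfolding B(5) V_def dim_span by (rule dim_le_card) (auto intro: span_base)
  also have "\<dots> \<le> CARD('n)"
    by (rule card_image_le) simp
  finally obtain \<iota> :: "real^'k \<Rightarrow> 'n" where \<iota>: "inj_on \<iota> B"
    using card_le_inj[OF finB finite, of "UNIV :: 'n set"] by blast
  define A where "A = (\<chi> i l. if l \<in> \<iota> ` B then b i \<bullet> the_inv_into B \<iota> l else 0)"
  have "(A ** transpose A) $ i $ j = b i \<bullet> b j" for i j
  proof -
    have "(A ** transpose A) $ i $ j = (\<Sum>l\<in>UNIV. A $ i $ l * A $ j $ l)"
      by (simp add: matrix_matrix_mult_def transpose_def)
    also have "\<dots> = (\<Sum>l\<in>\<iota> ` B. (b i \<bullet> the_inv_into B \<iota> l) * (b j \<bullet> the_inv_into B \<iota> l))"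
      by (rule sum.mono_neutral_cong_right) (auto simp: A_def)
    also have "\<dots> = (\<Sum>e\<in>B. (b i \<bullet> e) * (b j \<bullet> e))"
      using \<iota> by (simp add: sum.reindex the_inv_into_f_f)
    also have "\<dots> = b i \<bullet> (\<Sum>e\<in>B. (b j \<bullet> e) *\<^sub>R e)"
      by (simp add: inner_sum_right mult.commute)
    also have "(\<Sum>e\<in>B. (b j \<bullet> e) *\<^sub>R e) = b j"
    proof (rule orthonormal_basis_expand[OF B(2) B(3) _ finB])
      show "b j \<in> span B"
        unfolding B(6) V_def by (simp add: span_base)
    qed
    finally show ?thesis .
  qed
  then show ?thesis
    using G by auto
qed

lemma Gamma_mat_entry: "Gamma_mat P h y $ i $ j = (\<Sum>sa\<in>UNIV. y $ sa * Sigma_mat P h sa $ i $ j)"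
  unfolding Gamma_mat_def by (simp add: sum_component)

lemma one_hot_covariance:
  fixes p :: "'s::finite pmf"
  shows "(\<Sum>k\<in>UNIV. pmf p k * ((if k = i then 1 else 0) - pmf p i) * ((if k = j then 1 else 0) - pmf p j))
    = pmf p i * ((if i = j then 1 else 0) - pmf p j)"
proof -
  have "(\<Sum>k\<in>UNIV. pmf p k * ((if k = i then 1 else 0) - pmf p i) * ((if k = j then 1 else 0) - pmf p j))
     = (\<Sum>k\<in>UNIV. pmf p k * (if k = i then 1 else 0) * (if k = j then 1 else 0))
       - pmf p j * (\<Sum>k\<in>UNIV. pmf p k * (if k = i then 1 else 0))
       - pmf p i * (\<Sum>k\<in>UNIV. pmf p k * (if k = j then 1 else 0))
       + pmf p i * pmf p j * (\<Sum>k\<in>UNIV. pmf p k)"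
    by (simp add: algebra_simps sum.distrib sum_subtractf sum_distrib_left)
  also have "\<dots> = pmf p i * ((if i = j then 1 else 0) - pmf p j)"
    by (simp add: sum_pmf_eq_1 if_distrib[of "\<lambda>x. _ * x"] algebra_simps cong: if_cong)
  finally show ?thesis .
qed

text \<open>Gamma is the Gram matrix of the vectors sqrt (y(s,a) P(k|s,a)) (e_k - P(.|s,a)).\<close>

lemma Gamma_mat_factor_exists:
  fixes P :: "nat \<Rightarrow> 's::finite \<Rightarrow> bool \<Rightarrow> 's pmf"
  assumes y: "\<And>sa. 0 \<le> y $ sa"
  shows "\<exists>A::real^'s^'s. A ** transpose A = Gamma_mat P h y"
proof -
  define u where "u = (\<lambda>(sa, k). sqrt (y $ sa * pmf (P h (fst sa) (snd sa)) k) *\<^sub>R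
      (axis k 1 - (\<chi> i. pmf (P h (fst sa) (snd sa)) i)))"
  obtain A :: "real^'s^'s" where A: "\<And>i j. (A ** transpose A) $ i $ j = (\<Sum>m\<in>UNIV. u m $ i * u m $ j)"
    using exists_square_gram_factor[of u] by blast
  have u_prod: "u (sa, k) $ i * u (sa, k) $ j = y $ sa * (pmf (P h (fst sa) (snd sa)) k *
      ((if k = i then 1 else 0) - pmf (P h (fst sa) (snd sa)) i) *
      ((if k = j then 1 else 0) - pmf (P h (fst sa) (snd sa)) j))" for sa k i j
  proof -
    let ?p = "P h (fst sa) (snd sa)"
    have "sqrt (y $ sa * pmf ?p k) * sqrt (y $ sa * pmf ?p k) = y $ sa * pmf ?p k"
      using y[of sa] by simp
    then show ?thesis
      by (simp add: u_def axis_def algebra_simps)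
  qed
  have "(A ** transpose A) $ i $ j = Gamma_mat P h y $ i $ j" for i j
  proof -
    have "(\<Sum>m\<in>UNIV. u m $ i * u m $ j) = (\<Sum>sa\<in>UNIV. \<Sum>k\<in>UNIV. u (sa, k) $ i * u (sa, k) $ j)"
      by (simp add: sum.cartesian_product flip: UNIV_Times_UNIV)
    also have "\<dots> = Gamma_mat P h y $ i $ j"
      by (simp add: u_prod Gamma_mat_entry Sigma_mat_def one_hot_covariance flip: sum_distrib_left)
    finally show ?thesis
      using A by simp
  qed
  then show ?thesis
    by (auto simp: vec_eq_iff)
qed

lemma cov_factor_Gamma_mat:
  "(\<And>sa. 0 \<le> y $ sa) \<Longrightarrow> cov_factor (Gamma_mat P h y) ** transpose (cov_factor (Gamma_mat P h y))
    = Gamma_mat P h y"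
  unfolding cov_factor_def by (rule someI_ex[OF Gamma_mat_factor_exists])

lemma Gamma_mat_diag:
  "Gamma_mat P h y $ i $ i
    = (\<Sum>sa\<in>UNIV. y $ sa * (pmf (P h (fst sa) (snd sa)) i * (1 - pmf (P h (fst sa) (snd sa)) i)))"
  by (simp add: Gamma_mat_entry Sigma_mat_def)

lemma Gamma_mat_diag_le:
  assumes "\<And>sa. 0 \<le> y $ sa" "(\<Sum>sa\<in>UNIV. y $ sa) = 1"
  shows "Gamma_mat P h y $ i $ i \<le> 1 / 4"
proof -
  have "Gamma_mat P h y $ i $ i \<le> (\<Sum>sa\<in>UNIV. y $ sa * (1 / 4))"
    unfolding Gamma_mat_diag
  proof (intro sum_mono mult_left_mono assms(1))
    fix sa
    show "pmf (P h (fst sa) (snd sa)) i * (1 - pmf (P h (fst sa) (snd sa)) i) \<le> 1 / 4"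
      using zero_le_power2[of "pmf (P h (fst sa) (snd sa)) i - 1/2"]
      by (simp add: power2_eq_square algebra_simps)
  qed
  also have "\<dots> = (\<Sum>sa\<in>UNIV. y $ sa) * (1 / 4)"
    by (rule sum_distrib_right[symmetric])
  finally show ?thesis
    using assms(2) by simp
qed

lemma Gamma_mat_diag_eq_0:
  assumes "\<And>sa. 0 \<le> y $ sa" "phi P h y $ i = 0"
  shows "Gamma_mat P h y $ i $ i = 0"
proof -
  have "\<forall>sa\<in>UNIV. y $ sa * pmf (P h (fst sa) (snd sa)) i = 0"
    using assms(2) unfolding phi_def by (subst sum_nonneg_eq_0_iff[symmetric]) (auto simp: assms(1))
  then show ?thesis
    unfolding Gamma_mat_diag by (intro sum.neutral ballI) (metis mult.assoc mult_zero_left)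
qed

lemma sum_Gamma_mat_entries:
  fixes P :: "nat \<Rightarrow> 's::finite \<Rightarrow> bool \<Rightarrow> 's pmf"
  shows "(\<Sum>i\<in>UNIV. \<Sum>j\<in>UNIV. Gamma_mat P h y $ i $ j) = 0"
proof -
  have Sigma0: "(\<Sum>i\<in>UNIV. \<Sum>j\<in>UNIV. pmf p i * ((if i = j then 1 else 0) - pmf p j)) = 0" for p :: "'s pmf"
  proof -
    have "(\<Sum>i\<in>UNIV. \<Sum>j\<in>UNIV. pmf p i * ((if i = j then 1 else 0) - pmf p j))
        = (\<Sum>i\<in>UNIV. pmf p i - pmf p i * (\<Sum>j\<in>UNIV. pmf p j))"
      by (simp add: algebra_simps sum_subtractf sum_distrib_left if_distrib[of "\<lambda>x. _ * x"] cong: if_cong)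
    then show ?thesis
      by (simp add: sum_pmf_eq_1)
  qed
  have "(\<Sum>i\<in>UNIV. \<Sum>j\<in>UNIV. Gamma_mat P h y $ i $ j)
      = (\<Sum>sa\<in>UNIV. y $ sa * (\<Sum>i\<in>UNIV. \<Sum>j\<in>UNIV. Sigma_mat P h sa $ i $ j))"
    by (simp add: Gamma_mat_entry sum_distrib_left) (subst sum.swap, rule sum.cong, simp, subst sum.swap, simp)
  then show ?thesis
    by (simp add: Sigma_mat_def Sigma0)
qed

lemma inner_row_factor: "A ** transpose A = \<Gamma> \<Longrightarrow> A $ i \<bullet> A $ i = \<Gamma> $ i $ i"
  by (auto simp: matrix_matrix_mult_def transpose_def inner_vec_def)

lemma factor_row_eq_0:
  fixes A :: "real^'m^'n"
  shows "A ** transpose A = \<Gamma> \<Longrightarrow> \<Gamma> $ i $ i = 0 \<Longrightarrow> A $ i = 0"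
  using inner_row_factor by (metis inner_eq_zero_iff)

text \<open>The column sums of A have total squared norm equal to the sum of all entries of Gamma.\<close>

lemma sum_factor_mulv_eq_0:
  fixes A :: "real^'n^'n"
  assumes A: "A ** transpose A = \<Gamma>" and \<Gamma>: "(\<Sum>i\<in>UNIV. \<Sum>j\<in>UNIV. \<Gamma> $ i $ j) = 0"
  shows "(\<Sum>i\<in>UNIV. (A *v w) $ i) = 0"
proof -
  have "(\<Sum>i\<in>UNIV. \<Sum>j\<in>UNIV. \<Gamma> $ i $ j) = (\<Sum>i\<in>UNIV. \<Sum>j\<in>UNIV. \<Sum>l\<in>UNIV. A $ i $ l * A $ j $ l)"
    unfolding A[symmetric] by (simp add: matrix_matrix_mult_def transpose_def)
  also have "\<dots> = (\<Sum>i\<in>UNIV. \<Sum>l\<in>UNIV. \<Sum>j\<in>UNIV. A $ i $ l * A $ j $ l)"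
    by (rule sum.cong[OF refl], rule sum.swap)
  also have "\<dots> = (\<Sum>l\<in>UNIV. \<Sum>i\<in>UNIV. \<Sum>j\<in>UNIV. A $ i $ l * A $ j $ l)"
    by (rule sum.swap)
  also have "\<dots> = (\<Sum>l\<in>UNIV. (\<Sum>i\<in>UNIV. A $ i $ l)\<^sup>2)"
    by (simp add: power2_eq_square sum_product)
  finally have "(\<Sum>i\<in>UNIV. \<Sum>j\<in>UNIV. \<Gamma> $ i $ j) = (\<Sum>l\<in>UNIV. (\<Sum>i\<in>UNIV. A $ i $ l)\<^sup>2)" .
  then have col: "(\<Sum>i\<in>UNIV. A $ i $ l) = 0" for l
    using \<Gamma> sum_nonneg_eq_0_iff[of UNIV "\<lambda>l. (\<Sum>i\<in>UNIV. A $ i $ l)\<^sup>2"] by simp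
  have "(\<Sum>i\<in>UNIV. (A *v w) $ i) = (\<Sum>l\<in>UNIV. w $ l * (\<Sum>i\<in>UNIV. A $ i $ l))"
    by (simp add: matrix_vector_mult_def sum_distrib_left mult.commute) (rule sum.swap)
  then show ?thesis
    by (simp add: col)
qed

lemma nn_integral_lborel_vec_prod:
  fixes g :: "'n::finite \<Rightarrow> real \<Rightarrow> ennreal"
  assumes [measurable]: "\<And>i. g i \<in> borel_measurable borel"
  shows "(\<integral>\<^sup>+w. (\<Prod>i\<in>UNIV. g i (w $ i)) \<partial>(lborel :: (real^'n) measure)) = (\<Prod>i\<in>UNIV. \<integral>\<^sup>+x. g i x \<partial>lborel)"
proof -
  have inj: "inj (\<lambda>i::'n. axis i (1::real))"
    by (auto simp: inj_def axis_eq_axis)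
  have Basis_eq: "(Basis :: (real^'n) set) = range (\<lambda>i. axis i 1)"
    by (auto simp: Basis_vec_def)
  have Basis: "(\<Prod>b\<in>(Basis :: (real^'n) set). F b) = (\<Prod>i\<in>UNIV. F (axis i 1))"
    for F :: "real^'n \<Rightarrow> ennreal"
    unfolding Basis_eq using inj by (simp add: prod.reindex)
  have "(\<integral>\<^sup>+x. (\<Prod>b\<in>Basis. g (axis_index b) (x \<bullet> b)) \<partial>(lborel :: (real^'n) measure))
      = (\<Prod>b\<in>(Basis :: (real^'n) set). (\<integral>\<^sup>+x. g (axis_index b) x \<partial>lborel))"
    by (subst nn_integral_lborel_prod) auto
  then show ?thesis
    unfolding Basis by (simp add: inner_axis)
qed

lemma std_normal_mgf:
  "(\<integral>\<^sup>+x. ennreal (std_normal_density x * exp (c * x)) \<partial>lborel) = ennreal (exp (c\<^sup>2 / 2))"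
proof -
  have "std_normal_density x * exp (c * x) = exp (c\<^sup>2 / 2) * normal_density c 1 x" for x
  proof -
    have "- x\<^sup>2 / 2 + c * x = c\<^sup>2 / 2 + - (x - c)\<^sup>2 / 2"
      by (simp add: power2_eq_square field_simps)
    then show ?thesis
      unfolding normal_density_def by (simp add: exp_add[symmetric] mult.commute mult.left_commute)
  qed
  then have "(\<integral>\<^sup>+x. ennreal (std_normal_density x * exp (c * x)) \<partial>lborel)
      = ennreal (exp (c\<^sup>2 / 2)) * (\<integral>\<^sup>+x. ennreal (normal_density c 1 x) \<partial>lborel)"
    by (simp add: ennreal_mult nn_integral_cmult)
  also have "(\<integral>\<^sup>+x. ennreal (normal_density c 1 x) \<partial>lborel) = 1"
    by (subst nn_integral_eq_integral) auto
  finally show ?thesis by simp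
qed

lemma std_gaussian_mgf:
  fixes a :: "real^'n"
  shows "(\<integral>\<^sup>+w. ennreal (exp (l * (a \<bullet> w))) \<partial>std_gaussian) = ennreal (exp (l\<^sup>2 * (a \<bullet> a) / 2))"
proof -
  have factor: "ennreal (\<Prod>i\<in>UNIV. std_normal_density (w $ i)) * ennreal (exp (l * (a \<bullet> w)))
      = (\<Prod>i\<in>UNIV. ennreal (std_normal_density (w $ i) * exp ((l * a $ i) * w $ i)))" for w :: "real^'n"
    by (simp add: ennreal_mult[symmetric] prod_nonneg prod_ennreal inner_vec_def sum_distrib_left
        exp_sum prod.distrib mult.assoc)
  have "(\<integral>\<^sup>+w. ennreal (exp (l * (a \<bullet> w))) \<partial>std_gaussian)
      = (\<integral>\<^sup>+w. (\<Prod>i\<in>UNIV. ennreal (std_normal_density (w $ i) * exp ((l * a $ i) * w $ i))) \<partial>lborel)"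
    unfolding std_gaussian_def by (simp add: nn_integral_density factor)
  also have "\<dots> = (\<Prod>i\<in>UNIV. \<integral>\<^sup>+x. ennreal (std_normal_density x * exp ((l * a $ i) * x)) \<partial>lborel)"
    by (rule nn_integral_lborel_vec_prod) simp
  also have "\<dots> = (\<Prod>i\<in>UNIV. ennreal (exp ((l * a $ i)\<^sup>2 / 2)))"
    by (simp add: std_normal_mgf)
  also have "\<dots> = ennreal (exp (l\<^sup>2 * (a \<bullet> a) / 2))"
    by (simp add: prod_ennreal exp_sum[symmetric] inner_vec_def sum_divide_distrib[symmetric]
        sum_distrib_left power2_eq_square algebra_simps)
  finally show ?thesis .
qed

lemma prob_space_std_gaussian: "prob_space (std_gaussian :: (real^'n) measure)"
proof
  have "emeasure (std_gaussian :: (real^'n) measure) (space std_gaussian)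
      = (\<integral>\<^sup>+w. ennreal (exp (0 * ((0::real^'n) \<bullet> w))) \<partial>std_gaussian)"
    by (simp add: nn_integral_const)
  also have "\<dots> = 1"
    by (subst std_gaussian_mgf) simp
  finally show "emeasure (std_gaussian :: (real^'n) measure) (space std_gaussian) = 1" .
qed

lemma sets_std_gaussian [measurable_cong, simp]: "sets (std_gaussian :: (real^'n) measure) = sets borel"
  by (simp add: std_gaussian_def)

lemma borel_measurable_mat_mulv [measurable]: "(\<lambda>w. (A::real^'n^'m) *v w) \<in> borel_measurable borel"
  by (intro borel_measurable_continuous_onI linear_continuous_on
      matrix_vector_mul_linear[THEN linear_conv_bounded_linear[THEN iffD1]])

lemma prob_space_gaussian: "prob_space (gaussian (\<Gamma> :: real^'n^'n))"
  unfolding gaussian_def by (intro prob_space.prob_space_distr prob_space_std_gaussian) simp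

lemma sets_gaussian [measurable_cong, simp]: "sets (gaussian (\<Gamma> :: real^'n^'n)) = sets borel"
  unfolding gaussian_def by simp

lemma space_gaussian [simp]: "space (gaussian (\<Gamma> :: real^'n^'n)) = UNIV"
  unfolding gaussian_def by simp

lemma gaussian_component_mgf:
  "(\<integral>\<^sup>+v. ennreal (exp (l * v $ i)) \<partial>gaussian \<Gamma>)
    = ennreal (exp (l\<^sup>2 * (cov_factor \<Gamma> $ i \<bullet> cov_factor \<Gamma> $ i) / 2))"
proof -
  have "(\<integral>\<^sup>+v. ennreal (exp (l * v $ i)) \<partial>gaussian \<Gamma>)
      = (\<integral>\<^sup>+w. ennreal (exp (l * (cov_factor \<Gamma> $ i \<bullet> w))) \<partial>std_gaussian)"
    unfolding gaussian_eq_distr_cov_factor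
    by (subst nn_integral_distr) (auto simp: matrix_vector_mult_def inner_vec_def)
  then show ?thesis
    by (simp add: std_gaussian_mgf)
qed

lemma gaussian_component_tail:
  assumes "cov_factor \<Gamma> ** transpose (cov_factor \<Gamma>) = \<Gamma>" "\<Gamma> $ i $ i \<le> 1 / 4" "0 \<le> t"
  shows "measure (gaussian \<Gamma>) {v. t < \<bar>v $ i\<bar>} \<le> 2 * exp (- 2 * t\<^sup>2)"
proof -
  interpret prob_space "gaussian \<Gamma>"
    by (rule prob_space_gaussian)
  have "prob {v \<in> space (gaussian \<Gamma>). t < \<bar>v $ i\<bar>} \<le> 2 * exp (- 2 * t\<^sup>2 / 1)"
  proof (rule subgaussian_tail)
    show "(\<integral>\<^sup>+x. ennreal (exp (l * x $ i)) \<partial>gaussian \<Gamma>) \<le> ennreal (exp (1 * l\<^sup>2 / 8))" for l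
    proof -
      have "l\<^sup>2 * (cov_factor \<Gamma> $ i \<bullet> cov_factor \<Gamma> $ i) / 2 \<le> l\<^sup>2 * (1/4) / 2"
        using assms(2) inner_row_factor[OF assms(1)] by (intro divide_right_mono mult_left_mono) auto
      then show ?thesis
        unfolding gaussian_component_mgf by (intro ennreal_leI) simp
    qed
  qed (use assms(3) in auto)
  then show ?thesis by simp
qed

lemma gaussian_Gamma_mat_tail:
  fixes P :: "nat \<Rightarrow> 's::finite \<Rightarrow> bool \<Rightarrow> 's pmf"
  assumes y: "\<And>sa. 0 \<le> y $ sa" "(\<Sum>sa\<in>UNIV. y $ sa) = 1" and t: "0 \<le> t"
  shows "measure (gaussian (Gamma_mat P h y)) {v. \<exists>i. t < \<bar>v $ i\<bar>} \<le> real CARD('s) * (2 * exp (- 2 * t\<^sup>2))"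
proof -
  interpret prob_space "gaussian (Gamma_mat P h y)"
    by (rule prob_space_gaussian)
  have "prob {v. \<exists>i. t < \<bar>v $ i\<bar>} = prob (\<Union>i. {v. t < \<bar>v $ i\<bar>})"
    by (rule arg_cong[where f=prob]) auto
  also have "\<dots> \<le> (\<Sum>i\<in>UNIV. prob {v. t < \<bar>v $ i\<bar>})"
    by (rule finite_measure_subadditive_finite) auto
  also have "\<dots> \<le> (\<Sum>i\<in>(UNIV::'s set). 2 * exp (- 2 * t\<^sup>2))"
    by (intro sum_mono gaussian_component_tail cov_factor_Gamma_mat Gamma_mat_diag_le y t)
  finally show ?thesis by simp
qed

lemma AE_gaussian_in_range_cov_factor:
  "AE v in gaussian (\<Gamma> :: real^'n^'n). v \<in> range (\<lambda>w. cov_factor \<Gamma> *v w)"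
proof -
  have "closed (range (\<lambda>w. cov_factor \<Gamma> *v w))"
    by (intro closed_subspace linear_subspace_image matrix_vector_mul_linear subspace_UNIV)
  then have "{v \<in> space borel. v \<in> range (\<lambda>w. cov_factor \<Gamma> *v w)} \<in> sets borel"
    by (simp add: borel_closed)
  then show ?thesis
    unfolding gaussian_eq_distr_cov_factor by (subst AE_distr_iff) auto
qed

section \<open>The Gaussian system\<close>

lemma gtraj_in_prob_simplex: "xini \<in> prob_simplex \<Longrightarrow> gtraj P N \<pi> xini \<omega> h \<in> prob_simplex"
  by (cases h) (auto simp: proj_simplex_in_prob_simplex)

lemma prob_space_gnoise_space: "prob_space (gnoise_space P H ys)"
  unfolding gnoise_space_def by (intro prob_space_PiM prob_space_gaussian)

lemma measurable_gnoise_component: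
  assumes "h \<in> {1..<H}"
  shows "(\<lambda>\<omega>. \<omega> h) \<in> borel_measurable (gnoise_space P H ys)"
proof -
  have "(\<lambda>\<omega>. \<omega> h) \<in> measurable (gnoise_space P H ys) (gaussian (Gamma_mat P h (ys h)))"
    unfolding gnoise_space_def using assms by (rule measurable_component_singleton)
  then show ?thesis
    by (simp add: measurable_cong_sets[OF refl sets_gaussian])
qed

lemma measurable_gtraj:
  assumes \<pi>: "\<And>h. (\<lambda>x. \<pi> x h) \<in> borel_measurable borel"
  shows "h \<le> H \<Longrightarrow> (\<lambda>\<omega>. gtraj P N \<pi> xini \<omega> h) \<in> borel_measurable (gnoise_space P H ys)"
proof (induction h)
  case (Suc h)
  show ?case
  proof (cases "h = 0")
    case False
    then have h: "h \<in> {1..<H}"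
      using Suc.prems by auto
    note [measurable] = measurable_gnoise_component[OF h] \<pi>
    have [measurable]: "(\<lambda>\<omega>. gtraj P N \<pi> xini \<omega> h) \<in> borel_measurable (gnoise_space P H ys)"
      using Suc h by simp
    show ?thesis
      using False by simp
  qed simp
qed simp

lemma AE_gnoise_in_range_cov_factor:
  "AE \<omega> in gnoise_space P H ys. \<forall>h\<in>{1..<H}. \<omega> h \<in> range (\<lambda>w. cov_factor (Gamma_mat P h (ys h)) *v w)"
proof (rule AE_finite_allI)
  fix h assume "h \<in> {1..<H}"
  then show "AE \<omega> in gnoise_space P H ys. \<omega> h \<in> range (\<lambda>w. cov_factor (Gamma_mat P h (ys h)) *v w)"
    unfolding gnoise_space_def
    by (rule AE_PiM_component[OF prob_space_gaussian _ AE_gaussian_in_range_cov_factor])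
qed simp

lemma prob_large_gnoise_le:
  fixes P :: "nat \<Rightarrow> 's::finite \<Rightarrow> bool \<Rightarrow> 's pmf"
  assumes N: "1 \<le> N" and h: "h \<in> {1..<H}"
    and y: "\<And>sa. 0 \<le> ys h $ sa" "(\<Sum>sa\<in>UNIV. ys h $ sa) = 1"
  shows "measure (gnoise_space P H ys)
     {\<omega> \<in> space (gnoise_space P H ys). \<not> linf ((1 / sqrt (real N)) *\<^sub>R \<omega> h) \<le> delta_N N}
     \<le> 2 * real CARD('s) / real N powr ln (real N)"
proof -
  interpret product_prob_space "\<lambda>h. gaussian (Gamma_mat P h (ys h))" "{1..<H}"
    by (simp add: product_prob_space_def product_sigma_finite_def prob_space_gaussian
        prob_space_imp_sigma_finite product_prob_space_axioms_def)
  define t where "t = sqrt (real N) * delta_N N"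
  have t: "0 \<le> t" "t\<^sup>2 = real N * (delta_N N)\<^sup>2"
    using N by (simp_all add: t_def delta_N_nonneg power_mult_distrib)
  have large: "\<not> linf ((1 / sqrt (real N)) *\<^sub>R v) \<le> delta_N N \<longleftrightarrow> v \<in> {v. \<exists>i. t < \<bar>v $ i\<bar>}" for v :: "real^'s"
    using N by (auto simp: linf_scaleR linf_le_iff not_le t_def divide_le_eq mult.commute)
  have "{v::real^'s. \<exists>i. t < \<bar>v $ i\<bar>} = (\<Union>i. {v. t < \<bar>v $ i\<bar>})"
    by auto
  then have [measurable]: "{v::real^'s. \<exists>i. t < \<bar>v $ i\<bar>} \<in> sets borel"
    by (auto intro!: borel_open open_Collect_less continuous_intros)
  have "measure (gnoise_space P H ys)
      {\<omega> \<in> space (gnoise_space P H ys). \<not> linf ((1 / sqrt (real N)) *\<^sub>R \<omega> h) \<le> delta_N N}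
      = measure (gaussian (Gamma_mat P h (ys h))) {v. \<exists>i. t < \<bar>v $ i\<bar>}"
    unfolding large gnoise_space_def measure_def
    by (subst emeasure_PiM_Collect_single[OF h]) simp_all
  also have "\<dots> \<le> real CARD('s) * (2 * exp (- 2 * real N * (delta_N N)\<^sup>2))"
    using gaussian_Gamma_mat_tail[OF y t(1)] by (simp add: t(2) mult.assoc)
  also have "\<dots> \<le> real CARD('s) * (2 * (1 / real N powr ln (real N)))"
    using exp_neg_two_N_delta_N_sq_le[OF N] by (intro mult_left_mono) auto
  finally show ?thesis by (simp add: mult.commute)
qed

lemma one_minus_twice_le_divide:
  fixes p q e :: real
  assumes "1 / 2 \<le> q" "0 \<le> e" "q - e \<le> p"
  shows "1 - 2 * e \<le> p / q"
proof -
  have "e / q \<le> e / (1 / 2)"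
    using assms by (intro divide_left_mono) auto
  then have "1 - 2 * e \<le> (q - e) / q"
    using assms(1) by (simp add: diff_divide_distrib)
  also have "\<dots> \<le> p / q"
    using assms by (intro divide_right_mono) auto
  finally show ?thesis .
qed

context fluid_tube
begin

text \<open>Only the positive coordinates of x*_(h+1) matter: the Gaussian noise vanishes in the
  others.\<close>

definition large_N :: "nat \<Rightarrow> bool" where
  "large_N N \<longleftrightarrow>
     (\<forall>h\<in>{1..<H}. \<forall>i. 0 < xs (Suc h) $ i \<longrightarrow> (\<kappa> * lip P h * z h + 1) * delta_N N \<le> xs (Suc h) $ i)
     \<and> real H * (2 * real CARD('s) / real N powr ln (real N)) \<le> 1 / 2"

lemma eventually_large_N: "eventually large_N sequentially"
proof -
  have threshold: "eventually (\<lambda>N. 0 < xs (Suc h) $ i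
      \<longrightarrow> (\<kappa> * lip P h * z h + 1) * delta_N N \<le> xs (Suc h) $ i) sequentially" for h i
  proof (cases "0 < xs (Suc h) $ i")
    case True
    have c: "0 < \<kappa> * lip P h * z h + 1"
      using lip_nonneg[of P h] \<kappa>_nonneg z_nonneg[of h] by (simp add: add_nonneg_pos)
    have "eventually (\<lambda>N. delta_N N < xs (Suc h) $ i / (\<kappa> * lip P h * z h + 1)) sequentially"
      using True c by (intro order_tendstoD(2)[OF delta_N_tendsto_0]) simp
    then show ?thesis
      by (rule eventually_mono) (use c in \<open>simp add: field_simps\<close>)
  qed simp
  have "(\<lambda>N. real H * (2 * real CARD('s) / real N powr ln (real N))) \<longlonglongrightarrow> 0"
    by real_asymp
  then have "eventually (\<lambda>N. real H * (2 * real CARD('s) / real N powr ln (real N)) < 1 / 2) sequentially"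
    by (rule order_tendstoD(2)) simp
  then show ?thesis
    unfolding large_N_def using threshold
    by (intro eventually_conj eventually_ball_finite ballI eventually_all_finite)
      (auto elim: eventually_mono)
qed

end

locale gaussian_run = fluid_tube P \<alpha> H xini xs ys \<kappa> z
  for P :: "nat \<Rightarrow> 's::finite \<Rightarrow> bool \<Rightarrow> 's pmf" and \<alpha> H xini xs ys \<kappa> z +
  fixes N :: nat and \<pi> pi0 :: "real^'s \<Rightarrow> nat \<Rightarrow> real^('s \<times> bool)"
  assumes N_pos: "1 \<le> N" and admissible: "admissible_G \<alpha> H \<pi>"
    and in_Pi: "in_Pi_delta prob_simplex H \<kappa> z (delta_N N) xs ys pi0 \<pi>"
begin

abbreviation state :: "(nat \<Rightarrow> real^'s) \<Rightarrow> nat \<Rightarrow> real^'s" where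
  "state \<omega> h \<equiv> gtraj P N \<pi> xini \<omega> h"

abbreviation unprojected_next :: "(nat \<Rightarrow> real^'s) \<Rightarrow> nat \<Rightarrow> real^'s" where
  "unprojected_next \<omega> h \<equiv> phi P h (\<pi> (state \<omega> h) h) + (1 / sqrt (real N)) *\<^sub>R \<omega> h"

abbreviation in_tube :: "(nat \<Rightarrow> real^'s) \<Rightarrow> nat \<Rightarrow> bool" where
  "in_tube \<omega> h \<equiv> linf (state \<omega> h - xs h) \<le> z h * delta_N N"

abbreviation small_noise :: "(nat \<Rightarrow> real^'s) \<Rightarrow> nat \<Rightarrow> bool" where
  "small_noise \<omega> h \<equiv> linf ((1 / sqrt (real N)) *\<^sub>R \<omega> h) \<le> delta_N N"

abbreviation noise_space :: "(nat \<Rightarrow> real^'s) measure" where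
  "noise_space \<equiv> gnoise_space P H ys"

sublocale noise: prob_space noise_space
  by (rule prob_space_gnoise_space)

lemma measurable_state: "h \<le> H \<Longrightarrow> (\<lambda>\<omega>. state \<omega> h) \<in> borel_measurable noise_space"
  using admissible unfolding admissible_G_def by (intro measurable_gtraj) auto

lemma measurable_unprojected_next:
  assumes h: "h \<in> {1..<H}"
  shows "(\<lambda>\<omega>. unprojected_next \<omega> h) \<in> borel_measurable noise_space"
proof -
  note [measurable] = measurable_state[of h] measurable_gnoise_component[OF h]
  have [measurable]: "(\<lambda>x. \<pi> x h) \<in> borel_measurable borel"
    using admissible unfolding admissible_G_def by auto
  show ?thesis
    using h by simp
qed

lemma sets_in_tube: "h \<le> H \<Longrightarrow> {\<omega> \<in> space noise_space. in_tube \<omega> h} \<in> sets noise_space"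
  by (rule borel_measurable_le)
    (auto intro!: measurable_compose[OF _ borel_measurable_linf] borel_measurable_diff measurable_state)

lemma sets_large_noise:
  "h \<in> {1..<H} \<Longrightarrow> {\<omega> \<in> space noise_space. \<not> small_noise \<omega> h} \<in> sets noise_space"
  by (rule sets.sets_Collect_neg, rule borel_measurable_le)
    (auto intro!: measurable_compose[OF _ borel_measurable_linf] borel_measurable_scaleR
      measurable_gnoise_component)

lemma sets_unprojected_next_nonneg:
  assumes h: "h \<in> {1..<H}"
  shows "{\<omega> \<in> space noise_space. \<forall>i. 0 \<le> unprojected_next \<omega> h $ i} \<in> sets noise_space"
proof -
  have "{\<omega> \<in> space noise_space. \<forall>i\<in>UNIV. 0 \<le> unprojected_next \<omega> h $ i} \<in> sets noise_space"
    by (intro sets.sets_Collect_finite_All borel_measurable_le borel_measurable_const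
        measurable_compose[OF measurable_unprojected_next[OF h] borel_measurable_vec_nth]) simp
  then show ?thesis
    by simp
qed

lemma feasible_action_state:
  "h \<in> {1..H} \<Longrightarrow> feasible_action \<alpha> (state \<omega> h) (\<pi> (state \<omega> h) h)"
  using admissible gtraj_in_prob_simplex[OF xini] unfolding admissible_G_def by blast

lemma in_tube_if_small_noise:
  "h \<in> {1..H} \<Longrightarrow> (\<forall>h'\<in>{1..<h}. small_noise \<omega> h') \<Longrightarrow> in_tube \<omega> h"
proof (induction h)
  case (Suc h)
  show ?case
  proof (cases "h = 0")
    case True
    then show ?thesis
      using xs_1 z_nonneg[of 1] delta_N_nonneg[of N] by simp
  next
    case False
    then have h: "h \<in> {1..<H}" "1 \<le> h"
      using Suc.prems by auto
    then show ?thesis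
      using Suc by (auto intro!: tube_step_proj[OF in_Pi gtraj_in_prob_simplex[OF xini]])
  qed
qed simp

lemma prob_large_noise_le:
  "h \<in> {1..<H} \<Longrightarrow> noise.prob {\<omega> \<in> space noise_space. \<not> small_noise \<omega> h}
    \<le> 2 * real CARD('s) / real N powr ln (real N)"
  by (intro prob_large_gnoise_le N_pos ys_nonneg ys_sum) auto

theorem prob_all_in_tube:
  "noise.prob {\<omega> \<in> space noise_space. \<forall>h\<in>{1..H}. in_tube \<omega> h}
    \<ge> 1 - real (H - 1) * (2 * real CARD('s) / real N powr ln (real N))"
proof -
  let ?large = "{\<omega> \<in> space noise_space. \<exists>h\<in>{1..<H}. \<not> small_noise \<omega> h}"
  have "?large = (\<Union>h\<in>{1..<H}. {\<omega> \<in> space noise_space. \<not> small_noise \<omega> h})"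
    by auto
  then have "noise.prob ?large \<le> (\<Sum>h\<in>{1..<H}. noise.prob {\<omega> \<in> space noise_space. \<not> small_noise \<omega> h})"
    using sets_large_noise by (simp add: noise.finite_measure_subadditive_finite image_subset_iff)
  also have "\<dots> \<le> real (H - 1) * (2 * real CARD('s) / real N powr ln (real N))"
    using sum_mono[OF prob_large_noise_le, of "{1..<H}"] by simp
  finally have "1 - real (H - 1) * (2 * real CARD('s) / real N powr ln (real N))
      \<le> noise.prob (space noise_space - ?large)"
    using sets_large_noise by (subst noise.prob_compl) (auto intro: sets.sets_Collect_finite_Ex)
  also have "\<dots> \<le> noise.prob {\<omega> \<in> space noise_space. \<forall>h\<in>{1..H}. in_tube \<omega> h}"
    using sets_in_tube
    by (intro noise.finite_measure_mono sets.sets_Collect_finite_All)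
      (auto intro: in_tube_if_small_noise)
  finally show ?thesis .
qed

lemma state_Suc_eq_unprojected_next_iff:
  assumes h: "h \<in> {1..<H}" and range: "\<omega> h \<in> range (\<lambda>w. cov_factor (Gamma_mat P h (ys h)) *v w)"
  shows "state \<omega> (Suc h) = unprojected_next \<omega> h \<longleftrightarrow> (\<forall>i. 0 \<le> unprojected_next \<omega> h $ i)"
proof -
  have hH: "h \<in> {1..H}"
    using h by auto
  obtain w where w: "\<omega> h = cov_factor (Gamma_mat P h (ys h)) *v w"
    using range by auto
  have noise_sum: "(\<Sum>i\<in>UNIV. \<omega> h $ i) = 0"
    unfolding w
    by (rule sum_factor_mulv_eq_0[OF cov_factor_Gamma_mat[OF ys_nonneg[OF hH]] sum_Gamma_mat_entries])
  have "(\<Sum>sa\<in>UNIV. \<pi> (state \<omega> h) h $ sa) = 1"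
    by (rule feasible_action_sum[OF feasible_action_state[OF hH] gtraj_in_prob_simplex[OF xini]])
  then have "(\<Sum>i\<in>UNIV. unprojected_next \<omega> h $ i) = 1"
    using noise_sum by (simp add: sum.distrib sum_phi sum_divide_distrib[symmetric])
  moreover have "state \<omega> (Suc h) = unprojected_next \<omega> h \<longleftrightarrow> unprojected_next \<omega> h \<in> prob_simplex"
    using h by (simp add: proj_simplex_eq_iff)
  ultimately show ?thesis
    by (simp add: prob_simplex_def)
qed

theorem cond_prob_state_Suc_eq:
  assumes h: "h \<in> {1..<H}"
  shows "cond_prob noise_space (\<lambda>\<omega>. state \<omega> (Suc h) = unprojected_next \<omega> h) (\<lambda>\<omega>. in_tube \<omega> h)
    = cond_prob noise_space (\<lambda>\<omega>. \<forall>i. 0 \<le> unprojected_next \<omega> h $ i) (\<lambda>\<omega>. in_tube \<omega> h)"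
proof (rule noise.cond_prob_eq_AE)
  show "AE \<omega> in noise_space. in_tube \<omega> h
      \<longrightarrow> (state \<omega> (Suc h) = unprojected_next \<omega> h) = (\<forall>i. 0 \<le> unprojected_next \<omega> h $ i)"
    using AE_gnoise_in_range_cov_factor by eventually_elim (use h state_Suc_eq_unprojected_next_iff in blast)
  show "{\<omega> \<in> space noise_space. state \<omega> (Suc h) = unprojected_next \<omega> h} \<in> sets noise_space"
    using h by (intro measurable_equality_set measurable_state measurable_unprojected_next) auto
qed (use h sets_unprojected_next_nonneg sets_in_tube in auto)

lemma unprojected_next_nonneg:
  assumes large: "large_N N" and h: "h \<in> {1..<H}"
    and tube: "in_tube \<omega> h" and small: "small_noise \<omega> h"
    and range: "\<omega> h \<in> range (\<lambda>w. cov_factor (Gamma_mat P h (ys h)) *v w)"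
  shows "0 \<le> unprojected_next \<omega> h $ i"
proof -
  let ?Y = "\<pi> (state \<omega> h) h"
  have hH: "h \<in> {1..H}" "Suc h \<in> {1..H}"
    using h by auto
  have Y_nonneg: "0 \<le> ?Y $ sa" for sa
    using feasible_action_state[OF hH(1)] by (rule feasible_action_nonneg)
  have "0 \<le> xs (Suc h) $ i"
    using xs_in_prob_simplex[OF hH(2)] by (simp add: prob_simplex_def)
  then consider "xs (Suc h) $ i = 0" | "0 < xs (Suc h) $ i"
    by linarith
  then show ?thesis
  proof cases
    case 1
    then have "Gamma_mat P h (ys h) $ i $ i = 0"
      using h ys_nonneg[OF hH(1)] by (intro Gamma_mat_diag_eq_0) (auto simp: xs_Suc)
    then have "cov_factor (Gamma_mat P h (ys h)) $ i = 0"
      using factor_row_eq_0 cov_factor_Gamma_mat ys_nonneg[OF hH(1)] by blast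
    then have "\<omega> h $ i = 0"
      using range by (auto simp: matrix_vector_mult_def)
    then show ?thesis
      using phi_nonneg[OF Y_nonneg] by simp
  next
    case 2
    have "xs (Suc h) $ i - lip P h * (\<kappa> * z h * delta_N N) \<le> phi P h ?Y $ i"
      using abs_le_linf[of "phi P h ?Y - xs (Suc h)" i]
        linf_phi_action_le[OF in_Pi gtraj_in_prob_simplex[OF xini] h tube] by simp
    moreover have "- delta_N N \<le> ((1 / sqrt (real N)) *\<^sub>R \<omega> h) $ i"
      using abs_le_linf[of "(1 / sqrt (real N)) *\<^sub>R \<omega> h" i] small by linarith
    moreover have "(\<kappa> * lip P h * z h + 1) * delta_N N \<le> xs (Suc h) $ i"
      using large 2 h unfolding large_N_def by blast
    ultimately show ?thesis
      by (simp add: algebra_simps)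
  qed
qed

lemma prob_in_tube_le_unprojected_next_nonneg:
  assumes large: "large_N N" and h: "h \<in> {1..<H}"
  shows "noise.prob {\<omega> \<in> space noise_space. in_tube \<omega> h} - 2 * real CARD('s) / real N powr ln (real N)
    \<le> noise.prob {\<omega> \<in> space noise_space. (\<forall>i. 0 \<le> unprojected_next \<omega> h $ i) \<and> in_tube \<omega> h}"
proof -
  let ?good = "{\<omega> \<in> space noise_space. (\<forall>i. 0 \<le> unprojected_next \<omega> h $ i) \<and> in_tube \<omega> h}"
  let ?large = "{\<omega> \<in> space noise_space. \<not> small_noise \<omega> h}"
  have "?good = {\<omega> \<in> space noise_space. \<forall>i. 0 \<le> unprojected_next \<omega> h $ i}
      \<inter> {\<omega> \<in> space noise_space. in_tube \<omega> h}"
    by auto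
  then have sets: "?good \<in> sets noise_space" "?large \<in> sets noise_space"
    using h sets_unprojected_next_nonneg[OF h] sets_in_tube[of h] sets_large_noise[OF h] by auto
  have "noise.prob {\<omega> \<in> space noise_space. in_tube \<omega> h} \<le> noise.prob (?good \<union> ?large)"
  proof (rule noise.finite_measure_mono_AE)
    show "AE \<omega> in noise_space. \<omega> \<in> {\<omega> \<in> space noise_space. in_tube \<omega> h} \<longrightarrow> \<omega> \<in> ?good \<union> ?large"
      using AE_gnoise_in_range_cov_factor
      by eventually_elim (use h unprojected_next_nonneg[OF large h] in auto)
  qed (use sets in auto)
  also have "\<dots> \<le> noise.prob ?good + noise.prob ?large"
    using sets by (intro measure_subadditive) (auto simp: noise.emeasure_eq_measure)
  finally show ?thesis
    using prob_large_noise_le[OF h] by simp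
qed

theorem cond_prob_unprojected_next_nonneg_ge:
  assumes large: "large_N N" and h: "h \<in> {1..<H}"
  shows "cond_prob noise_space (\<lambda>\<omega>. \<forall>i. 0 \<le> unprojected_next \<omega> h $ i) (\<lambda>\<omega>. in_tube \<omega> h)
    \<ge> 1 - 2 * (2 * real CARD('s) / real N powr ln (real N))"
proof -
  let ?\<epsilon> = "2 * real CARD('s) / real N powr ln (real N)"
  have "1 - real (H - 1) * ?\<epsilon> \<le> noise.prob {\<omega> \<in> space noise_space. in_tube \<omega> h}"
    using prob_all_in_tube h sets_in_tube[of h]
    by (auto elim!: order_trans intro!: noise.finite_measure_mono)
  moreover have "real (H - 1) * ?\<epsilon> \<le> real H * ?\<epsilon>"
    by (intro mult_right_mono) auto
  moreover have "real H * ?\<epsilon> \<le> 1 / 2"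
    using large unfolding large_N_def by blast
  ultimately have "1 / 2 \<le> noise.prob {\<omega> \<in> space noise_space. in_tube \<omega> h}"
    by linarith
  then show ?thesis
    unfolding cond_prob_def
    by (intro one_minus_twice_le_divide prob_in_tube_le_unprojected_next_nonneg[OF large h]) auto
qed

end

context gaussian_run
begin

text \<open>The constant C only has to dominate the bounds for large N: for the finitely many other N
  it is chosen so large that the claimed lower bounds are negative.\<close>

theorem concentration_bounds:
  assumes C: "real H * (2 * real CARD('s)) \<le> C" "4 * real CARD('s) \<le> C"
    and small_N: "\<not> large_N N \<Longrightarrow> real N powr ln (real N) \<le> C"
  shows "(\<forall>h\<in>{1..<H}.
            cond_prob noise_space (\<lambda>\<omega>. state \<omega> (Suc h) = unprojected_next \<omega> h) (\<lambda>\<omega>. in_tube \<omega> h)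
              = cond_prob noise_space (\<lambda>\<omega>. \<forall>i. 0 \<le> unprojected_next \<omega> h $ i) (\<lambda>\<omega>. in_tube \<omega> h)
            \<and> cond_prob noise_space (\<lambda>\<omega>. \<forall>i. 0 \<le> unprojected_next \<omega> h $ i) (\<lambda>\<omega>. in_tube \<omega> h)
              \<ge> 1 - C / real N powr ln (real N))
     \<and> noise.prob {\<omega> \<in> space noise_space. \<forall>h\<in>{1..H}. in_tube \<omega> h} \<ge> 1 - C / real N powr ln (real N)"
proof (intro conjI ballI)
  have N_powr_pos: "0 < real N powr ln (real N)"
    using N_pos by simp
  have "real (H - 1) * (2 * real CARD('s)) \<le> real H * (2 * real CARD('s))"
    by (intro mult_right_mono) auto
  also have "\<dots> \<le> C"
    by (rule C(1))
  finally have "real (H - 1) * (2 * real CARD('s)) \<le> C" .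
  then have "real (H - 1) * (2 * real CARD('s) / real N powr ln (real N)) \<le> C / real N powr ln (real N)"
    using N_powr_pos by (simp add: divide_right_mono)
  then show "noise.prob {\<omega> \<in> space noise_space. \<forall>h\<in>{1..H}. in_tube \<omega> h} \<ge> 1 - C / real N powr ln (real N)"
    using prob_all_in_tube by linarith
  fix h assume h: "h \<in> {1..<H}"
  show "cond_prob noise_space (\<lambda>\<omega>. state \<omega> (Suc h) = unprojected_next \<omega> h) (\<lambda>\<omega>. in_tube \<omega> h)
      = cond_prob noise_space (\<lambda>\<omega>. \<forall>i. 0 \<le> unprojected_next \<omega> h $ i) (\<lambda>\<omega>. in_tube \<omega> h)"
    by (rule cond_prob_state_Suc_eq[OF h])
  show "cond_prob noise_space (\<lambda>\<omega>. \<forall>i. 0 \<le> unprojected_next \<omega> h $ i) (\<lambda>\<omega>. in_tube \<omega> h)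
      \<ge> 1 - C / real N powr ln (real N)"
  proof (cases "large_N N")
    case True
    have "2 * (2 * real CARD('s) / real N powr ln (real N)) \<le> C / real N powr ln (real N)"
      using C(2) N_powr_pos by (simp add: divide_right_mono)
    then show ?thesis
      using cond_prob_unprojected_next_nonneg_ge[OF True h] by linarith
  next
    case False
    then have "1 \<le> C / real N powr ln (real N)"
      using small_N N_powr_pos by simp
    moreover have "0 \<le> cond_prob noise_space (\<lambda>\<omega>. \<forall>i. 0 \<le> unprojected_next \<omega> h $ i) (\<lambda>\<omega>. in_tube \<omega> h)"
      by (simp add: cond_prob_def)
    ultimately show ?thesis
      by linarith
  qed
qed

end

context fluid_tube
begin

theorem N_system_concentration:
  "\<exists>C>0. \<forall>N \<pi> pi0. 1 \<le> N \<longrightarrow> xini \<in> simplexN N \<longrightarrow> admissible_N \<alpha> H N \<pi>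
     \<longrightarrow> in_Pi_delta (simplexN N) H \<kappa> z (delta_N N) xs ys pi0 \<pi>
     \<longrightarrow> measure_pmf.prob (ntraj P N \<pi> xini (H - 1)) {X. \<forall>h\<in>{1..H}. linf (X h - xs h) \<le> z h * delta_N N}
       \<ge> 1 - C / real N powr ln (real N)"
  using N_system_tube_prob H_pos by (intro exI[of _ "2 * real H * real CARD('s)"]) auto

theorem gaussian_system_concentration:
  "\<exists>C>0. \<forall>N \<pi> pi0. 1 \<le> N \<longrightarrow> admissible_G \<alpha> H \<pi>
     \<longrightarrow> in_Pi_delta prob_simplex H \<kappa> z (delta_N N) xs ys pi0 \<pi>
     \<longrightarrow> (\<forall>h\<in>{1..<H}.
            cond_prob (gnoise_space P H ys)
              (\<lambda>\<omega>. gtraj P N \<pi> xini \<omega> (Suc h)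
                     = phi P h (\<pi> (gtraj P N \<pi> xini \<omega> h) h) + (1 / sqrt (real N)) *\<^sub>R \<omega> h)
              (\<lambda>\<omega>. linf (gtraj P N \<pi> xini \<omega> h - xs h) \<le> z h * delta_N N)
            = cond_prob (gnoise_space P H ys)
              (\<lambda>\<omega>. \<forall>i. 0 \<le> (phi P h (\<pi> (gtraj P N \<pi> xini \<omega> h) h) + (1 / sqrt (real N)) *\<^sub>R \<omega> h) $ i)
              (\<lambda>\<omega>. linf (gtraj P N \<pi> xini \<omega> h - xs h) \<le> z h * delta_N N)
          \<and> cond_prob (gnoise_space P H ys)
              (\<lambda>\<omega>. \<forall>i. 0 \<le> (phi P h (\<pi> (gtraj P N \<pi> xini \<omega> h) h) + (1 / sqrt (real N)) *\<^sub>R \<omega> h) $ i)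
              (\<lambda>\<omega>. linf (gtraj P N \<pi> xini \<omega> h - xs h) \<le> z h * delta_N N)
            \<ge> 1 - C / real N powr ln (real N))
       \<and> measure (gnoise_space P H ys)
           {\<omega> \<in> space (gnoise_space P H ys). \<forall>h\<in>{1..H}. linf (gtraj P N \<pi> xini \<omega> h - xs h) \<le> z h * delta_N N}
         \<ge> 1 - C / real N powr ln (real N)"
proof -
  obtain N0 where N0: "\<And>N. N0 \<le> N \<Longrightarrow> large_N N"
    using eventually_large_N by (auto simp: eventually_sequentially)
  define C where "C = real H * (2 * real CARD('s)) + 4 * real CARD('s) + (\<Sum>n<N0. real n powr ln (real n))"
  have C: "real H * (2 * real CARD('s)) \<le> C" "4 * real CARD('s) \<le> C" "0 < C"
    using H_pos by (auto simp: C_def intro!: add_nonneg_nonneg add_pos_nonneg sum_nonneg)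
  have "real N powr ln (real N) \<le> C" if "\<not> large_N N" for N
  proof -
    have "N \<in> {..<N0}"
      using N0 that by (meson lessThan_iff not_le)
    then have "real N powr ln (real N) \<le> (\<Sum>n<N0. real n powr ln (real n))"
      by (intro member_le_sum) auto
    moreover have "0 \<le> real H * (2 * real CARD('s)) + 4 * real CARD('s)"
      by simp
    ultimately show ?thesis
      unfolding C_def by linarith
  qed
  moreover have "gaussian_run P \<alpha> H xini xs ys \<kappa> z N \<pi> pi0"
    if "1 \<le> N" "admissible_G \<alpha> H \<pi>" "in_Pi_delta prob_simplex H \<kappa> z (delta_N N) xs ys pi0 \<pi>" for N \<pi> pi0
    using that by (intro gaussian_run.intro fluid_tube_axioms gaussian_run_axioms.intro)
  ultimately show ?thesis
    using C gaussian_run.concentration_bounds by blast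
qed

end

theorem lemma8:
  fixes P :: "nat \<Rightarrow> 's::finite \<Rightarrow> bool \<Rightarrow> 's pmf"
    and r :: "nat \<Rightarrow> 's \<Rightarrow> bool \<Rightarrow> real"
    and \<alpha> :: real and H :: nat and xini :: "real^'s"
    and xs :: "nat \<Rightarrow> real^'s" and ys :: "nat \<Rightarrow> real^('s \<times> bool)"
  assumes H: "1 \<le> H"
    and r_nonneg: "\<forall>h\<in>{1..H}. \<forall>s a. 0 \<le> r h s a"
    and alpha: "0 < \<alpha>" "\<alpha> < 1"
    and xini: "xini \<in> prob_simplex"
    and opt: "lp_optimal P r \<alpha> H xini xs ys"
  defines "\<kappa> \<equiv> kappa P r \<alpha> H xini ys"
    and "z \<equiv> zcoef P r \<alpha> H xini ys"
    and "goodN \<equiv> \<lambda>N::nat. 1 \<le> N \<and> \<alpha> * real N \<in> \<nat> \<and> xini \<in> simplexN N"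
  shows
    \<comment> \<open>(1) the N-system\<close>
    "(\<forall>pi0 :: nat \<Rightarrow> real^'s \<Rightarrow> nat \<Rightarrow> real^('s \<times> bool).
        (\<forall>N. goodN N \<longrightarrow> admissible_N \<alpha> H N (pi0 N)) \<longrightarrow>
        (\<exists>C>0. \<forall>N \<pi>. goodN N \<longrightarrow> admissible_N \<alpha> H N \<pi>
            \<longrightarrow> in_Pi_delta (simplexN N) H \<kappa> z (delta_N N) xs ys (pi0 N) \<pi>
            \<longrightarrow> measure_pmf.prob (ntraj P N \<pi> xini (H - 1))
                  {X. \<forall>h\<in>{1..H}. linf (X h - xs h) \<le> z h * delta_N N}
                \<ge> 1 - C / real N powr ln (real N)))
     \<and>
    \<comment> \<open>(2) the Gaussian stochastic system\<close>
     (\<forall>pi0 :: real^'s \<Rightarrow> nat \<Rightarrow> real^('s \<times> bool).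
        admissible_G \<alpha> H pi0 \<longrightarrow>
        (\<exists>C>0. \<forall>N \<pi>. goodN N \<longrightarrow> admissible_G \<alpha> H \<pi>
            \<longrightarrow> in_Pi_delta prob_simplex H \<kappa> z (delta_N N) xs ys pi0 \<pi>
            \<longrightarrow> (\<forall>h\<in>{1..<H}.
                   cond_prob (gnoise_space P H ys)
                     (\<lambda>\<omega>. gtraj P N \<pi> xini \<omega> (Suc h)
                            = phi P h (\<pi> (gtraj P N \<pi> xini \<omega> h) h) + (1 / sqrt (real N)) *\<^sub>R \<omega> h)
                     (\<lambda>\<omega>. linf (gtraj P N \<pi> xini \<omega> h - xs h) \<le> z h * delta_N N)
                 = cond_prob (gnoise_space P H ys)
                     (\<lambda>\<omega>. \<forall>i. 0 \<le> (phi P h (\<pi> (gtraj P N \<pi> xini \<omega> h) h)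
                                   + (1 / sqrt (real N)) *\<^sub>R \<omega> h) $ i)
                     (\<lambda>\<omega>. linf (gtraj P N \<pi> xini \<omega> h - xs h) \<le> z h * delta_N N)
                 \<and> cond_prob (gnoise_space P H ys)
                     (\<lambda>\<omega>. \<forall>i. 0 \<le> (phi P h (\<pi> (gtraj P N \<pi> xini \<omega> h) h)
                                   + (1 / sqrt (real N)) *\<^sub>R \<omega> h) $ i)
                     (\<lambda>\<omega>. linf (gtraj P N \<pi> xini \<omega> h - xs h) \<le> z h * delta_N N)
                   \<ge> 1 - C / real N powr ln (real N))
              \<and> measure (gnoise_space P H ys)
                  {\<omega> \<in> space (gnoise_space P H ys).
                     \<forall>h\<in>{1..H}. linf (gtraj P N \<pi> xini \<omega> h - xs h) \<le> z h * delta_N N}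
                \<ge> 1 - C / real N powr ln (real N)))"
proof -
  interpret fluid_tube P \<alpha> H xini xs ys \<kappa> z
  proof
    show "lp_feasible P \<alpha> H xini xs ys"
      using opt by (simp add: lp_optimal_def)
    show "0 \<le> \<kappa>"
      unfolding \<kappa>_def by (rule kappa_nonneg)
    show "0 \<le> z h" for h
      unfolding z_def using zcoef_ge_1 by (rule order_trans[OF zero_le_one])
    show "z (Suc h) = sqrt (real CARD('s)) * (\<kappa> * lip P h * z h + 1)" if "h \<in> {1..<H}" for h
      using that unfolding z_def \<kappa>_def by (intro zcoef_Suc) auto
  qed (use H xini in auto)
  show ?thesis
    using N_system_concentration gaussian_system_concentration unfolding goodN_def by blast
qed

end
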